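(* Let $\rho>1$ and $\mathcal Q=\bigcup_{\mathsf x\in\mathcal X}Q_{\mathsf x}(\rho)$. If $\mathcal X$ is a square lattice, then $$\eta_{\mathcal Q}(\rho)=\frac{4\rho^2\arctan\!\left(\frac{\sqrt{2\rho^2-1}-1}{\sqrt{2\rho^2-1}+1}\right)-2\sqrt{2\rho^2-1}+2}{(\rho^2-1)^2}.$$ If $\mathcal X$ is a triangular lattice, then with $r=\sqrt{4\rho^2-1}$, $$\eta_{\mathcal Q}(\rho)=\frac{4\sqrt3\,\rho^2\arctan\!\left(\frac{r-\sqrt3}{\sqrt3\,r+1}\right)-\sqrt3\,r+3}{(\rho^2-1)^2}.$$ For both lattices, $\eta_{\mathcal Q}(\rho)<\frac{4}{(1+\rho)^2}$. In particular $\eta_{\mathcal Q}(\rho)\sim\pi\rho^{-2}$ (square) and $\eta_{\mathcal Q}(\rho)\sim\frac{2\pi}{\sqrt3}\rho^{-2}$ (triangular) as $\rho\to\infty$.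
   Context: Q cell: $Q_{\mathsf x}(\rho)=\{\mathsf y\in\mathbb{R}^2:\min_{\mathsf x'\in\mathcal X\setminus\{\mathsf x\}}\|\mathsf x'-\mathsf y\|>\rho\|\mathsf x-\mathsf y\|\}$. Area fraction of $B\subset\mathbb{R}^2$: $\eta_B=\lim_{r\to\infty}|B\cap b(o,r)|/(\pi r^2)$. The lattices may have any (positive) spacing, as the area fraction is scale invariant. *)

theory Defs
  imports "HOL-Analysis.Analysis" "HOL-Library.Landau_Symbols"
begin

type_synonym point = "real \<times> real"

definition Q_cell :: "point set \<Rightarrow> real \<Rightarrow> point \<Rightarrow> point set" where
  "Q_cell X \<rho> x = {y. (INF x'\<in>X - {x}. norm (x' - y)) > \<rho> * norm (x - y)}"

definition Q_union :: "point set \<Rightarrow> real \<Rightarrow> point set" where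
  "Q_union X \<rho> = (\<Union>x\<in>X. Q_cell X \<rho> x)"

definition area_fraction :: "point set \<Rightarrow> real" where
  "area_fraction B = Lim at_top (\<lambda>r. measure lborel (B \<inter> ball 0 r) / (pi * r\<^sup>2))"

definition square_lattice :: "real \<Rightarrow> point set" where
  "square_lattice a = {(a * of_int i, a * of_int j) | i j :: int. True}"

definition triangular_lattice :: "real \<Rightarrow> point set" where
  "triangular_lattice a =
     {(a * (of_int i + of_int j / 2), a * of_int j * sqrt 3 / 2) | i j :: int. True}"

end

theory Submission
  imports Defs "HOL-Real_Asymp.Real_Asymp"
begin

text \<open>
  For \<open>\<rho> > 1\<close> the Q cells of a lattice are pairwise disjoint translates of the Q cell of the origin,
  so the area fraction of their union is the area of that cell divided by the area of a fundamental
  domain; this follows by counting the lattice points in a large disc with the help of tiles.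
  By Apollonius, \<open>\<rho> |z| < |n - z|\<close> says that \<open>z\<close> lies in the open disc of radius
  \<open>\<rho> |n| / (\<rho>\<^sup>2 - 1)\<close> centred at \<open>-n / (\<rho>\<^sup>2 - 1)\<close>, and in both lattices only the 4 resp. 6 nearest
  neighbours of the origin are relevant, so the cell is an intersection of 4 resp. 6 congruent discs.
  Its area is obtained by integrating the heights of its vertical slices with the primitive
  \<open>(u sqrt (R\<^sup>2 - u\<^sup>2) + R\<^sup>2 arcsin (u / R)) / 2\<close> of \<open>sqrt (R\<^sup>2 - u\<^sup>2)\<close>. The bound \<open>4 / (1 + \<rho>)\<^sup>2\<close> compares
  the cell with the circumscribed square resp. hexagon (via \<open>arctan x \<le> x\<close>), and the asymptotics follow
  from writing the arctangent as \<open>pi/4 - arctan (1 / sqrt (2 \<rho>\<^sup>2 - 1))\<close>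
  resp. \<open>pi/6 - arctan (1 / sqrt (4 \<rho>\<^sup>2 - 1))\<close>.
\<close>

section \<open>Lattice points in discs\<close>

definition skew_lattice :: "real \<Rightarrow> real \<Rightarrow> real \<Rightarrow> (real \<times> real) set" where
  "skew_lattice a b s = {(a * (of_int i + of_int j * s), b * of_int j) | i j :: int. True}"

lemma skew_latticeI: "(a * (of_int i + of_int j * s), b * of_int j) \<in> skew_lattice a b s"
  unfolding skew_lattice_def by blast

lemma skew_latticeE:
  assumes "x \<in> skew_lattice a b s"
  obtains i j :: int where "x = (a * (of_int i + of_int j * s), b * of_int j)"
  using assms unfolding skew_lattice_def by blast

lemma skew_lattice_diff:
  assumes "x \<in> skew_lattice a b s" "y \<in> skew_lattice a b s"
  shows "x - y \<in> skew_lattice a b s"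
proof -
  obtain i j i' j' where x: "x = (a * (of_int i + of_int j * s), b * of_int j)"
    and y: "y = (a * (of_int i' + of_int j' * s), b * of_int j')"
    using assms by (metis skew_latticeE)
  have "x - y = (a * (of_int (i - i') + of_int (j - j') * s), b * of_int (j - j'))"
    unfolding x y by (simp add: algebra_simps)
  then show ?thesis by (simp only: skew_latticeI)
qed

lemma skew_lattice_add:
  assumes "x \<in> skew_lattice a b s" "y \<in> skew_lattice a b s"
  shows "x + y \<in> skew_lattice a b s"
proof -
  obtain i j i' j' where x: "x = (a * (of_int i + of_int j * s), b * of_int j)"
    and y: "y = (a * (of_int i' + of_int j' * s), b * of_int j')"
    using assms by (metis skew_latticeE)
  have "x + y = (a * (of_int (i + i') + of_int (j + j') * s), b * of_int (j + j'))"
    unfolding x y by (simp add: algebra_simps)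
  then show ?thesis by (simp only: skew_latticeI)
qed

lemma finite_skew_lattice_cball:
  assumes a: "a > 0" and b: "b > 0"
  shows "finite (skew_lattice a b s \<inter> cball 0 t)"
proof -
  define M where "M = \<lceil>t/a + \<bar>s\<bar> * (t/b) + t/b\<rceil>"
  have "skew_lattice a b s \<inter> cball 0 t \<subseteq>
      (\<lambda>(i,j). (a * (of_int i + of_int j * s), b * of_int j)) ` ({-M..M} \<times> {-M..M})"
  proof
    fix x assume x: "x \<in> skew_lattice a b s \<inter> cball 0 t"
    then obtain i j where xe: "x = (a * (of_int i + of_int j * s), b * of_int j)"
      by (metis IntD1 skew_latticeE)
    have nx: "norm x \<le> t" using x by auto
    have "b * \<bar>of_int j\<bar> \<le> t"
      using norm_snd_le[of "snd x" "fst x"] nx b unfolding xe by (simp add: abs_mult)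
    then have jb: "\<bar>of_int j\<bar> \<le> t / b" using b by (simp add: pos_le_divide_eq mult.commute)
    have "a * \<bar>of_int i + of_int j * s\<bar> \<le> t"
      using norm_fst_le[of "fst x" "snd x"] nx a unfolding xe by (simp add: abs_mult)
    then have "\<bar>of_int i + of_int j * s\<bar> \<le> t / a" using a by (simp add: pos_le_divide_eq mult.commute)
    moreover have "\<bar>of_int j * s\<bar> \<le> t / b * \<bar>s\<bar>"
      unfolding abs_mult by (rule mult_right_mono[OF jb]) simp
    ultimately have ib: "\<bar>real_of_int i\<bar> \<le> t/a + \<bar>s\<bar> * (t/b)" by (simp add: abs_le_iff mult.commute)
    have t0: "0 \<le> t / b" using jb by linarith
    have M: "t/a + \<bar>s\<bar> * (t/b) + t/b \<le> of_int M" unfolding M_def by (rule le_of_int_ceiling)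
    have "\<bar>of_int j\<bar> \<le> (of_int M :: real)" "\<bar>of_int i\<bar> \<le> (of_int M :: real)"
      using jb ib t0 M mult_nonneg_nonneg[OF abs_ge_zero[of s] t0] by linarith+
    then have "\<bar>i\<bar> \<le> M" "\<bar>j\<bar> \<le> M" by linarith+
    then show "x \<in> (\<lambda>(i,j). (a * (of_int i + of_int j * s), b * of_int j)) ` ({-M..M} \<times> {-M..M})"
      unfolding xe by (intro image_eqI[where x="(i,j)"]) (auto simp: abs_le_iff)
  qed
  then show ?thesis by (rule finite_subset) auto
qed

definition tile :: "real \<Rightarrow> real \<Rightarrow> real \<times> real \<Rightarrow> (real \<times> real) set" where
  "tile a b x = {fst x <..< fst x + a} \<times> {snd x <..< snd x + b}"

definition closed_tile :: "real \<Rightarrow> real \<Rightarrow> real \<times> real \<Rightarrow> (real \<times> real) set" where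
  "closed_tile a b x = {fst x .. fst x + a} \<times> {snd x .. snd x + b}"

lemma emeasure_lborel_Times:
  fixes A B :: "real set"
  assumes "A \<in> sets borel" "B \<in> sets borel"
  shows "emeasure lborel (A \<times> B) = emeasure lborel A * emeasure lborel B"
proof -
  have "emeasure lborel (A \<times> B) = emeasure (lborel \<Otimes>\<^sub>M lborel) (A \<times> B)" by (simp add: lborel_prod)
  also have "\<dots> = emeasure lborel A * emeasure lborel B"
    using assms by (intro lborel.emeasure_pair_measure_Times) auto
  finally show ?thesis .
qed

lemma emeasure_tile: "0 \<le> a \<Longrightarrow> 0 \<le> b \<Longrightarrow> emeasure lborel (tile a b x) = ennreal (a * b)"
  unfolding tile_def by (subst emeasure_lborel_Times) (auto simp: ennreal_mult[symmetric])

lemma measure_tile: "0 \<le> a \<Longrightarrow> 0 \<le> b \<Longrightarrow> measure lborel (tile a b x) = a * b"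
  by (simp add: measure_def emeasure_tile)

lemma measure_closed_tile: "0 \<le> a \<Longrightarrow> 0 \<le> b \<Longrightarrow> measure lborel (closed_tile a b x) = a * b"
  unfolding closed_tile_def measure_def by (subst emeasure_lborel_Times) (auto simp: ennreal_mult[symmetric])

lemma open_tile: "open (tile a b x)"
  unfolding tile_def by (intro open_Times) auto

lemma closed_closed_tile: "closed (closed_tile a b x)"
  unfolding closed_tile_def by (intro closed_Times) auto

lemma bounded_closed_tile: "bounded (closed_tile a b x)"
  unfolding closed_tile_def by (intro bounded_Times) auto

lemma norm_le_tile_size:
  assumes "z \<in> closed_tile a b x"
  shows "norm (z - x) \<le> a + b"
proof -
  have "norm (z - x) \<le> norm (fst (z - x)) + norm (snd (z - x))"
    using norm_Pair_le[of "fst (z - x)" "snd (z - x)"] unfolding prod.collapse .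
  also have "\<dots> \<le> a + b" using assms unfolding closed_tile_def by (auto simp: abs_le_iff)
  finally show ?thesis .
qed

lemma tile_subset_closed_tile: "tile a b x \<subseteq> closed_tile a b x"
  unfolding tile_def closed_tile_def by auto

lemma skew_lattice_tile_index:
  assumes a: "a > 0" and b: "b > 0" and z: "z \<in> tile a b (a * (of_int i + of_int j * s), b * of_int j)"
  shows "j = \<lfloor>snd z / b\<rfloor>" "i = \<lfloor>fst z / a - of_int j * s\<rfloor>"
proof -
  from z have z2: "b * of_int j < snd z" "snd z < b * of_int j + b" and
    z1: "a * (of_int i + of_int j * s) < fst z" "fst z < a * (of_int i + of_int j * s) + a"
    unfolding tile_def by auto
  have "of_int j < snd z / b" "snd z / b < of_int j + 1" using z2 b by (auto simp: field_simps)
  then show "j = \<lfloor>snd z / b\<rfloor>" by (intro floor_unique[symmetric]) auto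
  have "of_int i < fst z / a - of_int j * s" "fst z / a - of_int j * s < of_int i + 1"
    using z1 a by (auto simp: field_simps)
  then show "i = \<lfloor>fst z / a - of_int j * s\<rfloor>" by (intro floor_unique[symmetric]) auto
qed

lemma disjoint_skew_lattice_tiles:
  assumes a: "a > 0" and b: "b > 0"
  shows "disjoint_family_on (tile a b) (skew_lattice a b s)"
unfolding disjoint_family_on_def
proof (intro ballI impI, rule ccontr)
  fix x y assume x: "x \<in> skew_lattice a b s" and y: "y \<in> skew_lattice a b s" and "x \<noteq> y"
    and "tile a b x \<inter> tile a b y \<noteq> {}"
  then obtain z where z: "z \<in> tile a b x" "z \<in> tile a b y" by blast
  obtain i j where xe: "x = (a * (of_int i + of_int j * s), b * of_int j)" using x by (rule skew_latticeE)
  obtain i' j' where ye: "y = (a * (of_int i' + of_int j' * s), b * of_int j')" using y by (rule skew_latticeE)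
  have "j = j'" "i = i'"
    using skew_lattice_tile_index[OF a b, of z i j s] skew_lattice_tile_index[OF a b, of z i' j' s]
      z xe ye by simp_all
  then show False using \<open>x \<noteq> y\<close> xe ye by simp
qed

lemma skew_lattice_closed_tiles_cover:
  assumes a: "a > 0" and b: "b > 0"
  obtains x where "x \<in> skew_lattice a b s" "y \<in> closed_tile a b x"
proof -
  define j where "j = \<lfloor>snd y / b\<rfloor>"
  define i where "i = \<lfloor>fst y / a - of_int j * s\<rfloor>"
  have j1: "of_int j \<le> snd y / b" "snd y / b < of_int j + 1" unfolding j_def by linarith+
  have i1: "of_int i \<le> fst y / a - of_int j * s" "fst y / a - of_int j * s < of_int i + 1"
    unfolding i_def by linarith+
  have "b * of_int j \<le> snd y" "snd y \<le> b * of_int j + b" using j1 b by (auto simp: field_simps)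
  moreover have "a * (of_int i + of_int j * s) \<le> fst y" "fst y \<le> a * (of_int i + of_int j * s) + a"
    using i1 a by (auto simp: field_simps)
  ultimately have "y \<in> closed_tile a b (a * (of_int i + of_int j * s), b * of_int j)"
    unfolding closed_tile_def by (auto simp: mem_Times_iff)
  then show ?thesis using that skew_latticeI by blast
qed

lemma measure_cball_real2: "0 \<le> r \<Longrightarrow> measure lborel (cball (c :: real \<times> real) r) = pi * r\<^sup>2"
  by (simp add: content_cball unit_ball_vol_2 power2_eq_square)

lemma bounded_borel_fmeasurable:
  "bounded (S :: (real \<times> real) set) \<Longrightarrow> S \<in> sets borel \<Longrightarrow> S \<in> fmeasurable lborel"
  by (intro fmeasurableI emeasure_bounded_finite) auto

lemma card_skew_lattice_cball_le:
  assumes a: "a > 0" and b: "b > 0" and t: "0 \<le> t"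
  shows "real (card (skew_lattice a b s \<inter> cball 0 t)) * (a * b) \<le> pi * (t + a + b)\<^sup>2"
proof -
  define S where "S = skew_lattice a b s \<inter> cball 0 t"
  have fin: "finite S" unfolding S_def by (rule finite_skew_lattice_cball[OF a b])
  have sub: "(\<Union>x\<in>S. tile a b x) \<subseteq> cball 0 (t + a + b)"
  proof clarify
    fix x z assume x: "x \<in> S" and z: "z \<in> tile a b x"
    have "norm z \<le> norm x + norm (z - x)" using norm_triangle_ineq2[of z x] by linarith
    also have "\<dots> \<le> t + (a + b)"
      using x norm_le_tile_size[OF subsetD[OF tile_subset_closed_tile z]] unfolding S_def
      by (intro add_mono) auto
    finally show "z \<in> cball 0 (t + a + b)" by (simp add: add.assoc)
  qed
  have "real (card S) * (a * b) = (\<Sum>x\<in>S. measure lborel (tile a b x))"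
    using measure_tile[of a b] a b by simp
  also have "\<dots> = measure lborel (\<Union>x\<in>S. tile a b x)"
  proof (rule measure_finite_Union[OF fin, symmetric])
    show "disjoint_family_on (tile a b) S"
      using disjoint_skew_lattice_tiles[OF a b] unfolding S_def by (rule disjoint_family_on_mono[rotated]) auto
  qed (use emeasure_tile[of a b] a b open_tile in auto)
  also have "\<dots> \<le> measure lborel (cball (0::real\<times>real) (t + a + b))"
    using fin open_tile bounded_borel_fmeasurable[of "cball 0 (t + a + b)"]
    by (intro measure_mono_fmeasurable[OF sub]) auto
  also have "\<dots> = pi * (t + a + b)\<^sup>2" using a b t by (intro measure_cball_real2) auto
  finally show ?thesis unfolding S_def .
qed

lemma card_skew_lattice_cball_ge:
  assumes a: "a > 0" and b: "b > 0" and t: "a + b \<le> t"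
  shows "pi * (t - a - b)\<^sup>2 \<le> real (card (skew_lattice a b s \<inter> cball 0 t)) * (a * b)"
proof -
  define S where "S = skew_lattice a b s \<inter> cball 0 t"
  have fin: "finite S" unfolding S_def by (rule finite_skew_lattice_cball[OF a b])
  have sub: "cball 0 (t - a - b) \<subseteq> (\<Union>x\<in>S. closed_tile a b x)"
  proof
    fix y :: "real \<times> real" assume y: "y \<in> cball 0 (t - a - b)"
    obtain x where x: "x \<in> skew_lattice a b s" "y \<in> closed_tile a b x"
      using skew_lattice_closed_tiles_cover[OF a b] by blast
    have "norm x \<le> norm y + norm (y - x)"
      using norm_triangle_ineq2[of x y] norm_minus_commute[of x y] by linarith
    also have "\<dots> \<le> t" using y norm_le_tile_size[OF x(2)] by simp
    finally show "y \<in> (\<Union>x\<in>S. closed_tile a b x)" using x unfolding S_def by auto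
  qed
  have "pi * (t - a - b)\<^sup>2 = measure lborel (cball (0::real\<times>real) (t - a - b))"
    using t by (intro measure_cball_real2[symmetric]) auto
  also have "\<dots> \<le> measure lborel (\<Union>x\<in>S. closed_tile a b x)"
    using fin closed_closed_tile bounded_closed_tile
    by (intro measure_mono_fmeasurable[OF sub] bounded_borel_fmeasurable bounded_UN) auto
  also have "\<dots> \<le> (\<Sum>x\<in>S. measure lborel (closed_tile a b x))"
    using fin closed_closed_tile by (intro measure_UNION_le) auto
  also have "\<dots> = real (card S) * (a * b)" using measure_closed_tile[of a b] a b by simp
  finally show ?thesis unfolding S_def .
qed

section \<open>Density of a lattice-periodic set\<close>

lemma measure_lborel_translation:
  fixes C :: "(real \<times> real) set"
  assumes "open C"
  shows "measure lborel ((+) x ` C) = measure lborel C"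
proof -
  have "open ((+) x ` C)" using open_translation[OF assms, of x] by simp
  then have "measure lborel ((+) x ` C) = measure lebesgue ((+) x ` C)" by simp
  also have "\<dots> = measure lebesgue C" by (rule measure_translation)
  also have "\<dots> = measure lborel C" using assms by simp
  finally show ?thesis .
qed

lemma open_translation_image: "open C \<Longrightarrow> open ((+) x ` (C :: (real \<times> real) set))"
  using open_translation[of C x] by simp

lemma open_translates_Union: "open C \<Longrightarrow> open (\<Union>x\<in>S. (+) x ` (C :: (real \<times> real) set))"
  by (intro open_UN ballI open_translation_image)

lemma fmeasurable_translates_Union:
  fixes C :: "(real \<times> real) set"
  assumes C: "open C" "bounded C" and S: "finite S"
  shows "(\<Union>x\<in>S. (+) x ` C) \<in> fmeasurable lborel"
  using S open_translation_image[OF C(1)] bounded_translation[OF C(2)]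
  by (intro bounded_borel_fmeasurable bounded_UN) auto

lemma measure_disjoint_translates_Union:
  fixes C :: "(real \<times> real) set"
  assumes C: "open C" "bounded C" and S: "finite S" and disj: "disjoint_family_on (\<lambda>x. (+) x ` C) S"
  shows "measure lborel (\<Union>x\<in>S. (+) x ` C) = real (card S) * measure lborel C"
proof -
  have "measure lborel (\<Union>x\<in>S. (+) x ` C) = (\<Sum>x\<in>S. measure lborel ((+) x ` C))"
  proof (rule measure_finite_Union[OF S _ disj])
    show "emeasure lborel ((+) x ` C) \<noteq> \<infinity>" for x
      using emeasure_bounded_finite[OF bounded_translation[OF C(2)]] by (simp add: less_top)
  qed (use open_translation_image[OF C(1)] in auto)
  then show ?thesis using measure_lborel_translation[OF C(1)] by simp
qed

lemma measure_translates_Union_le: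
  fixes C :: "(real \<times> real) set"
  assumes C: "open C" and S: "finite S"
  shows "measure lborel (\<Union>x\<in>S. (+) x ` C) \<le> real (card S) * measure lborel C"
proof -
  have "measure lborel (\<Union>x\<in>S. (+) x ` C) \<le> (\<Sum>x\<in>S. measure lborel ((+) x ` C))"
    by (rule measure_UNION_le[OF S]) (use open_translation_image[OF C] in auto)
  then show ?thesis using measure_lborel_translation[OF C] by simp
qed

lemma measure_lattice_Union_ball_ge:
  fixes C :: "(real \<times> real) set"
  assumes a: "a > 0" and b: "b > 0" and C: "open C" "C \<subseteq> ball 0 R"
    and disj: "disjoint_family_on (\<lambda>x. (+) x ` C) (skew_lattice a b s)"
  shows "real (card (skew_lattice a b s \<inter> cball 0 (r - R))) * measure lborel C
           \<le> measure lborel ((\<Union>x\<in>skew_lattice a b s. (+) x ` C) \<inter> ball 0 r)"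
proof -
  define S where "S = skew_lattice a b s \<inter> cball 0 (r - R)"
  have S: "finite S" unfolding S_def by (rule finite_skew_lattice_cball[OF a b])
  have bC: "bounded C" using C(2) bounded_subset[OF bounded_ball] by blast
  have "disjoint_family_on (\<lambda>x. (+) x ` C) S"
    using disj unfolding S_def by (rule disjoint_family_on_mono[rotated]) auto
  then have "real (card S) * measure lborel C = measure lborel (\<Union>x\<in>S. (+) x ` C)"
    by (rule measure_disjoint_translates_Union[OF C(1) bC S, symmetric])
  also have "\<dots> \<le> measure lborel ((\<Union>x\<in>skew_lattice a b s. (+) x ` C) \<inter> ball 0 r)"
  proof (rule measure_mono_fmeasurable[OF _ _ bounded_borel_fmeasurable])
    show "(\<Union>x\<in>S. (+) x ` C) \<subseteq> (\<Union>x\<in>skew_lattice a b s. (+) x ` C) \<inter> ball 0 r"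
    proof
      fix y assume "y \<in> (\<Union>x\<in>S. (+) x ` C)"
      then obtain x c where x: "x \<in> S" and c: "c \<in> C" and y: "y = x + c" by auto
      have "norm (x + c) \<le> norm x + norm c" by (rule norm_triangle_ineq)
      also have "\<dots> < (r - R) + R" using x c C(2) unfolding S_def by (intro add_le_less_mono) auto
      finally show "y \<in> (\<Union>x\<in>skew_lattice a b s. (+) x ` C) \<inter> ball 0 r"
        using x c y unfolding S_def by auto
    qed
  qed (use fmeasurableD[OF fmeasurable_translates_Union[OF C(1) bC S]]
      open_Int[OF open_translates_Union[OF C(1)] open_ball] in auto)
  finally show ?thesis unfolding S_def .
qed

lemma measure_lattice_Union_ball_le:
  fixes C :: "(real \<times> real) set"
  assumes a: "a > 0" and b: "b > 0" and C: "open C" "C \<subseteq> ball 0 R"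
  shows "measure lborel ((\<Union>x\<in>skew_lattice a b s. (+) x ` C) \<inter> ball 0 r)
           \<le> real (card (skew_lattice a b s \<inter> cball 0 (r + R))) * measure lborel C"
proof -
  define S where "S = skew_lattice a b s \<inter> cball 0 (r + R)"
  have S: "finite S" unfolding S_def by (rule finite_skew_lattice_cball[OF a b])
  have bC: "bounded C" using C(2) bounded_subset[OF bounded_ball] by blast
  have "measure lborel ((\<Union>x\<in>skew_lattice a b s. (+) x ` C) \<inter> ball 0 r)
      \<le> measure lborel (\<Union>x\<in>S. (+) x ` C)"
  proof (rule measure_mono_fmeasurable[OF _ _ fmeasurable_translates_Union[OF C(1) bC S]])
    show "(\<Union>x\<in>skew_lattice a b s. (+) x ` C) \<inter> ball 0 r \<subseteq> (\<Union>x\<in>S. (+) x ` C)"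
    proof
      fix y assume "y \<in> (\<Union>x\<in>skew_lattice a b s. (+) x ` C) \<inter> ball 0 r"
      then obtain x c where x: "x \<in> skew_lattice a b s" and c: "c \<in> C" and y: "y = x + c"
        and xc: "norm (x + c) < r" by auto
      have "norm x \<le> norm (x + c) + norm c" using norm_triangle_ineq4[of "x + c" c] by simp
      also have "\<dots> \<le> r + R" using xc c C(2) by (intro add_mono) auto
      finally show "y \<in> (\<Union>x\<in>S. (+) x ` C)" using x c y unfolding S_def by auto
    qed
    show "(\<Union>x\<in>skew_lattice a b s. (+) x ` C) \<inter> ball 0 r \<in> sets lborel"
      using open_Int[OF open_translates_Union[OF C(1)] open_ball] by simp
  qed
  also have "\<dots> \<le> real (card S) * measure lborel C" by (rule measure_translates_Union_le[OF C(1) S])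
  finally show ?thesis unfolding S_def .
qed

lemma lattice_Union_ball_density_bounds:
  fixes C :: "(real \<times> real) set"
  assumes a: "a > 0" and b: "b > 0" and C: "open C" "C \<subseteq> ball 0 R" and R: "R \<ge> 0"
    and disj: "disjoint_family_on (\<lambda>x. (+) x ` C) (skew_lattice a b s)"
    and r: "R + a + b \<le> r"
  defines "E \<equiv> R + a + b" and "\<mu> \<equiv> measure lborel C / (a * b)"
  shows "\<mu> * ((r - E) / r)\<^sup>2 \<le> measure lborel ((\<Union>x\<in>skew_lattice a b s. (+) x ` C) \<inter> ball 0 r) / (pi * r\<^sup>2)"
    and "measure lborel ((\<Union>x\<in>skew_lattice a b s. (+) x ` C) \<inter> ball 0 r) / (pi * r\<^sup>2) \<le> \<mu> * ((r + E) / r)\<^sup>2"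
proof -
  define N where "N t = real (card (skew_lattice a b s \<inter> cball 0 t))" for t
  have \<mu>: "\<mu> \<ge> 0" "measure lborel C = \<mu> * (a * b)" unfolding \<mu>_def using a b by auto
  have "\<mu> * (pi * (r - E)\<^sup>2) \<le> \<mu> * (N (r - R) * (a * b))"
    using card_skew_lattice_cball_ge[OF a b, of "r - R" s] r \<mu>(1)
    unfolding N_def E_def by (intro mult_left_mono) (auto simp: algebra_simps)
  also have "\<dots> \<le> measure lborel ((\<Union>x\<in>skew_lattice a b s. (+) x ` C) \<inter> ball 0 r)"
    using measure_lattice_Union_ball_ge[OF a b C disj, where r=r] unfolding N_def \<mu>(2) by (simp add: ac_simps)
  finally have "\<mu> * (pi * (r - E)\<^sup>2) / (pi * r\<^sup>2)
      \<le> measure lborel ((\<Union>x\<in>skew_lattice a b s. (+) x ` C) \<inter> ball 0 r) / (pi * r\<^sup>2)"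
    by (rule divide_right_mono) simp
  then show "\<mu> * ((r - E) / r)\<^sup>2
      \<le> measure lborel ((\<Union>x\<in>skew_lattice a b s. (+) x ` C) \<inter> ball 0 r) / (pi * r\<^sup>2)"
    by (simp add: power_divide)
  have "measure lborel ((\<Union>x\<in>skew_lattice a b s. (+) x ` C) \<inter> ball 0 r) \<le> \<mu> * (N (r + R) * (a * b))"
    using measure_lattice_Union_ball_le[OF a b C, where r=r] unfolding N_def \<mu>(2) by (simp add: ac_simps)
  also have "\<dots> \<le> \<mu> * (pi * (r + E)\<^sup>2)"
    using card_skew_lattice_cball_le[OF a b, of "r + R" s] r R a b \<mu>(1)
    unfolding N_def E_def by (intro mult_left_mono) (auto simp: algebra_simps)
  finally have "measure lborel ((\<Union>x\<in>skew_lattice a b s. (+) x ` C) \<inter> ball 0 r) / (pi * r\<^sup>2)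
      \<le> \<mu> * (pi * (r + E)\<^sup>2) / (pi * r\<^sup>2)"
    by (rule divide_right_mono) simp
  then show "measure lborel ((\<Union>x\<in>skew_lattice a b s. (+) x ` C) \<inter> ball 0 r) / (pi * r\<^sup>2)
      \<le> \<mu> * ((r + E) / r)\<^sup>2"
    by (simp add: power_divide)
qed

lemma tendsto_lattice_union_density:
  fixes C :: "(real \<times> real) set"
  assumes a: "a > 0" and b: "b > 0" and C: "open C" "bounded C"
    and disj: "disjoint_family_on (\<lambda>x. (+) x ` C) (skew_lattice a b s)"
  shows "((\<lambda>r. measure lborel ((\<Union>x\<in>skew_lattice a b s. (+) x ` C) \<inter> ball 0 r) / (pi * r\<^sup>2))
           \<longlongrightarrow> measure lborel C / (a * b)) at_top"
proof -
  obtain R where R: "R > 0" "C \<subseteq> ball 0 R" using bounded_subset_ballD[OF C(2)] by blast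
  define E where "E = R + a + b"
  define \<mu> where "\<mu> = measure lborel C / (a * b)"
  note bounds = lattice_Union_ball_density_bounds[OF a b C(1) R(2) less_imp_le[OF R(1)] disj,
      folded E_def \<mu>_def]
  show ?thesis
  proof (rule tendsto_sandwich)
    show "\<forall>\<^sub>F r in at_top. \<mu> * ((r - E) / r)\<^sup>2
        \<le> measure lborel ((\<Union>x\<in>skew_lattice a b s. (+) x ` C) \<inter> ball 0 r) / (pi * r\<^sup>2)"
      using eventually_ge_at_top[of E] by (rule eventually_mono) (use bounds(1) E_def in simp)
    show "\<forall>\<^sub>F r in at_top. measure lborel ((\<Union>x\<in>skew_lattice a b s. (+) x ` C) \<inter> ball 0 r) / (pi * r\<^sup>2)
        \<le> \<mu> * ((r + E) / r)\<^sup>2"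
      using eventually_ge_at_top[of E] by (rule eventually_mono) (use bounds(2) E_def in simp)
    show "((\<lambda>r. \<mu> * ((r - E) / r)\<^sup>2) \<longlongrightarrow> measure lborel C / (a * b)) at_top"
      unfolding \<mu>_def by real_asymp
    show "((\<lambda>r. \<mu> * ((r + E) / r)\<^sup>2) \<longlongrightarrow> measure lborel C / (a * b)) at_top"
      unfolding \<mu>_def by real_asymp
  qed
qed

section \<open>Q cells of a lattice\<close>

text \<open>For finite nonempty \<open>N\<close> with \<open>0 \<notin> N\<close> this is \<open>Q_cell (insert 0 N) \<rho> 0\<close>.\<close>

definition origin_cell :: "real \<Rightarrow> (real \<times> real) set \<Rightarrow> (real \<times> real) set" where
  "origin_cell \<rho> N = {z. \<forall>n\<in>N. \<rho> * norm z < norm (n - z)}"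

lemma open_origin_cell:
  assumes "finite N"
  shows "open (origin_cell \<rho> N)"
proof -
  have "origin_cell \<rho> N = (\<Inter>n\<in>N. {z. \<rho> * norm z < norm (n - z)})"
    unfolding origin_cell_def by auto
  then show ?thesis using assms by (auto intro!: open_Collect_less continuous_intros)
qed

lemma origin_cell_subset_ball:
  assumes "\<rho> > 1" "n \<in> N"
  shows "origin_cell \<rho> N \<subseteq> ball 0 (norm n / (\<rho> - 1))"
proof
  fix z assume "z \<in> origin_cell \<rho> N"
  then have "\<rho> * norm z < norm (n - z)" using assms(2) unfolding origin_cell_def by blast
  also have "\<dots> \<le> norm n + norm z" by (rule norm_triangle_ineq4)
  finally have "(\<rho> - 1) * norm z < norm n" by (simp add: algebra_simps)
  then show "z \<in> ball 0 (norm n / (\<rho> - 1))" using assms(1) by (simp add: field_simps)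
qed

lemma INF_norm_lattice_shift:
  fixes L :: "(real \<times> real) set"
  assumes diff: "\<And>x y. x \<in> L \<Longrightarrow> y \<in> L \<Longrightarrow> x - y \<in> L"
    and add: "\<And>x y. x \<in> L \<Longrightarrow> y \<in> L \<Longrightarrow> x + y \<in> L" and x: "x \<in> L"
  shows "(INF x'\<in>L - {x}. norm (x' - y)) = (INF w\<in>L - {0}. norm (w - (y - x)))"
proof -
  have "(\<lambda>x'. norm (x' - y)) ` (L - {x}) = (\<lambda>w. norm (w - (y - x))) ` (L - {0})"
  proof (rule set_eqI, rule iffI)
    fix v assume "v \<in> (\<lambda>x'. norm (x' - y)) ` (L - {x})"
    then obtain x' where x': "x' \<in> L" "x' \<noteq> x" "v = norm (x' - y)" by auto
    have "x' - x \<in> L - {0}" using x' x diff by auto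
    moreover have "v = norm ((x' - x) - (y - x))" using x' by (simp add: algebra_simps)
    ultimately show "v \<in> (\<lambda>w. norm (w - (y - x))) ` (L - {0})" by blast
  next
    fix v assume "v \<in> (\<lambda>w. norm (w - (y - x))) ` (L - {0})"
    then obtain w where w: "w \<in> L" "w \<noteq> 0" "v = norm (w - (y - x))" by auto
    have "x + w \<in> L - {x}" using w x add by auto
    moreover have "v = norm ((x + w) - y)" using w by (simp add: algebra_simps)
    ultimately show "v \<in> (\<lambda>x'. norm (x' - y)) ` (L - {x})" by blast
  qed
  then show ?thesis by (simp add: image_image)
qed

lemma less_INF_norm_iff_origin_cell:
  fixes L N :: "(real \<times> real) set"
  assumes N: "finite N" "N \<noteq> {}" "N \<subseteq> L - {0}"
    and nearest: "\<And>z w. z \<in> origin_cell \<rho> N \<Longrightarrow> w \<in> L - {0} \<Longrightarrow> \<exists>n\<in>N. norm (n - z) \<le> norm (w - z)"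
  shows "\<rho> * norm z < (INF w\<in>L - {0}. norm (w - z)) \<longleftrightarrow> z \<in> origin_cell \<rho> N"
proof
  assume z: "\<rho> * norm z < (INF w\<in>L - {0}. norm (w - z))"
  have "(INF w\<in>L - {0}. norm (w - z)) \<le> norm (n - z)" if "n \<in> N" for n
    using that N(3) by (intro cINF_lower bdd_belowI[of _ 0]) auto
  then show "z \<in> origin_cell \<rho> N" using z unfolding origin_cell_def by force
next
  assume z: "z \<in> origin_cell \<rho> N"
  define m where "m = Min ((\<lambda>n. norm (n - z)) ` N)"
  have "\<rho> * norm z < m" unfolding m_def using N(1,2) z unfolding origin_cell_def by simp
  also have "m \<le> (INF w\<in>L - {0}. norm (w - z))"
  proof (rule cINF_greatest)
    show "L - {0} \<noteq> {}" using N by auto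
    fix w assume "w \<in> L - {0}"
    then obtain n where n: "n \<in> N" "norm (n - z) \<le> norm (w - z)" using nearest[OF z] by blast
    have "m \<le> norm (n - z)" unfolding m_def using N(1) n(1) by (intro Min_le) auto
    then show "m \<le> norm (w - z)" using n(2) by linarith
  qed
  finally show "\<rho> * norm z < (INF w\<in>L - {0}. norm (w - z))" .
qed

lemma Q_cell_lattice_eq:
  fixes L N :: "(real \<times> real) set"
  assumes diff: "\<And>x y. x \<in> L \<Longrightarrow> y \<in> L \<Longrightarrow> x - y \<in> L"
    and add: "\<And>x y. x \<in> L \<Longrightarrow> y \<in> L \<Longrightarrow> x + y \<in> L"
    and N: "finite N" "N \<noteq> {}" "N \<subseteq> L - {0}"
    and nearest: "\<And>z w. z \<in> origin_cell \<rho> N \<Longrightarrow> w \<in> L - {0} \<Longrightarrow> \<exists>n\<in>N. norm (n - z) \<le> norm (w - z)"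
    and x: "x \<in> L"
  shows "Q_cell L \<rho> x = (+) x ` origin_cell \<rho> N"
proof (rule set_eqI)
  fix y
  have "y \<in> Q_cell L \<rho> x \<longleftrightarrow> \<rho> * norm (x - y) < (INF x'\<in>L - {x}. norm (x' - y))"
    unfolding Q_cell_def by simp
  also have "\<dots> \<longleftrightarrow> \<rho> * norm (y - x) < (INF w\<in>L - {0}. norm (w - (y - x)))"
    using INF_norm_lattice_shift[OF diff add x, of y] norm_minus_commute[of x y] by simp
  also have "\<dots> \<longleftrightarrow> y \<in> (+) x ` origin_cell \<rho> N"
    using less_INF_norm_iff_origin_cell[OF N nearest, where z="y - x"] by (auto intro: image_eqI[where x="y - x"])
  finally show "y \<in> Q_cell L \<rho> x \<longleftrightarrow> y \<in> (+) x ` origin_cell \<rho> N" .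
qed

lemma Q_cell_disjoint:
  fixes L :: "(real \<times> real) set"
  assumes \<rho>: "\<rho> \<ge> 1" and x: "x \<in> L" and x': "x' \<in> L" and xx': "x \<noteq> x'"
  shows "Q_cell L \<rho> x \<inter> Q_cell L \<rho> x' = {}"
proof (rule ccontr)
  assume "Q_cell L \<rho> x \<inter> Q_cell L \<rho> x' \<noteq> {}"
  then obtain y where y: "y \<in> Q_cell L \<rho> x" "y \<in> Q_cell L \<rho> x'" by blast
  have bdd: "bdd_below ((\<lambda>w. norm (w - y)) ` S)" for S by (rule bdd_belowI[of _ 0]) auto
  have "(INF w\<in>L - {x}. norm (w - y)) \<le> norm (x' - y)" using x' xx' by (intro cINF_lower bdd) auto
  then have "\<rho> * norm (x - y) < norm (x' - y)" using y(1) unfolding Q_cell_def by simp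
  moreover have "(INF w\<in>L - {x'}. norm (w - y)) \<le> norm (x - y)" using x xx' by (intro cINF_lower bdd) auto
  then have "\<rho> * norm (x' - y) < norm (x - y)" using y(2) unfolding Q_cell_def by simp
  moreover have "norm (x - y) \<le> \<rho> * norm (x - y)" "norm (x' - y) \<le> \<rho> * norm (x' - y)"
    using \<rho> by (simp_all add: mult_le_cancel_right1)
  ultimately show False by linarith
qed

lemma area_fraction_eqI:
  "((\<lambda>r. measure lborel (B \<inter> ball 0 r) / (pi * r\<^sup>2)) \<longlongrightarrow> l) at_top \<Longrightarrow> area_fraction B = l"
  unfolding area_fraction_def by (rule tendsto_Lim) simp_all

lemma tendsto_Q_union_skew_lattice:
  fixes N :: "(real \<times> real) set"
  assumes a: "a > 0" and b: "b > 0" and \<rho>: "\<rho> > 1"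
    and N: "finite N" "N \<noteq> {}" "N \<subseteq> skew_lattice a b s - {0}"
    and nearest: "\<And>z w. z \<in> origin_cell \<rho> N \<Longrightarrow> w \<in> skew_lattice a b s - {0} \<Longrightarrow>
      \<exists>n\<in>N. norm (n - z) \<le> norm (w - z)"
  shows "((\<lambda>r. measure lborel (Q_union (skew_lattice a b s) \<rho> \<inter> ball 0 r) / (pi * r\<^sup>2))
           \<longlongrightarrow> measure lborel (origin_cell \<rho> N) / (a * b)) at_top"
proof -
  have cell: "Q_cell (skew_lattice a b s) \<rho> x = (+) x ` origin_cell \<rho> N" if "x \<in> skew_lattice a b s" for x
    by (rule Q_cell_lattice_eq[OF skew_lattice_diff skew_lattice_add N nearest that])
  have "Q_union (skew_lattice a b s) \<rho> = (\<Union>x\<in>skew_lattice a b s. (+) x ` origin_cell \<rho> N)"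
    unfolding Q_union_def using cell by simp
  moreover have "disjoint_family_on (\<lambda>x. (+) x ` origin_cell \<rho> N) (skew_lattice a b s)"
    unfolding disjoint_family_on_def using Q_cell_disjoint \<rho> cell by (metis less_imp_le)
  moreover obtain n where "n \<in> N" using N(2) by blast
  then have "bounded (origin_cell \<rho> N)"
    using origin_cell_subset_ball[OF \<rho>] bounded_subset[OF bounded_ball] by blast
  ultimately show ?thesis
    using tendsto_lattice_union_density[OF a b open_origin_cell[OF N(1)]] by simp
qed

lemma less_iff_power2_less: "0 \<le> x \<Longrightarrow> 0 \<le> y \<Longrightarrow> x < y \<longleftrightarrow> x\<^sup>2 < y\<^sup>2" for x y :: real
  by (auto intro: power_strict_mono power2_less_imp_less)

lemma apollonius_ball:
  fixes n z :: "'a :: real_inner"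
  assumes \<rho>: "\<rho> > 1"
  shows "\<rho> * norm z < norm (n - z) \<longleftrightarrow> norm (z + n /\<^sub>R (\<rho>\<^sup>2 - 1)) < \<rho> * norm n / (\<rho>\<^sup>2 - 1)"
proof -
  define c where "c = \<rho>\<^sup>2 - 1"
  have c: "c > 0" unfolding c_def using \<rho> by (simp add: power2_eq_square) (smt (verit) mult_less_cancel_left1)
  have \<rho>2: "\<rho>\<^sup>2 = c + 1" unfolding c_def by simp
  have "\<rho> * norm z < norm (n - z) \<longleftrightarrow> (\<rho> * norm z)\<^sup>2 < (norm (n - z))\<^sup>2"
    using \<rho> by (intro less_iff_power2_less) auto
  also have "\<dots> \<longleftrightarrow> c * (z \<bullet> z) + 2 * (z \<bullet> n) < n \<bullet> n"
    by (simp add: power_mult_distrib power2_norm_eq_inner \<rho>2 inner_diff algebra_simps inner_commute)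
  also have "\<dots> \<longleftrightarrow> (z \<bullet> z + 2 * (z \<bullet> n) / c + (n \<bullet> n) / c\<^sup>2) < \<rho>\<^sup>2 * (n \<bullet> n) / c\<^sup>2"
  proof -
    have "z \<bullet> z + 2 * (z \<bullet> n) / c + (n \<bullet> n) / c\<^sup>2 - \<rho>\<^sup>2 * (n \<bullet> n) / c\<^sup>2
        = (c * (z \<bullet> z) + 2 * (z \<bullet> n) - n \<bullet> n) / c"
      using c unfolding \<rho>2 by (simp add: field_simps power2_eq_square)
    then show ?thesis using c by (smt (verit) divide_less_0_iff)
  qed
  also have "\<dots> \<longleftrightarrow> (norm (z + n /\<^sub>R c))\<^sup>2 < (\<rho> * norm n / c)\<^sup>2"
    by (simp add: power2_norm_eq_inner inner_add power_divide power_mult_distrib algebra_simps inner_commute)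
      (simp add: divide_inverse power2_eq_square mult_ac)
  also have "\<dots> \<longleftrightarrow> norm (z + n /\<^sub>R c) < \<rho> * norm n / c"
    using \<rho> c by (intro less_iff_power2_less[symmetric]) auto
  finally show ?thesis unfolding c_def .
qed

lemma apollonius_pair:
  fixes a \<rho> u1 u2 :: real and z :: "real \<times> real"
  assumes a: "a > 0" and \<rho>: "\<rho> > 1" and u: "u1\<^sup>2 + u2\<^sup>2 = 1"
  defines "k \<equiv> a / (\<rho>\<^sup>2 - 1)"
  shows "\<rho> * norm z < norm ((a * u1, a * u2) - z) \<longleftrightarrow> (fst z + k * u1)\<^sup>2 + (snd z + k * u2)\<^sup>2 < (\<rho> * k)\<^sup>2"
proof -
  have n: "norm (a * u1, a * u2) = a" using a u by (simp add: norm_Pair power_mult_distrib flip: distrib_left)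
  have c: "(a * u1, a * u2) /\<^sub>R (\<rho>\<^sup>2 - 1) = (k * u1, k * u2)" unfolding k_def by (simp add: divide_inverse_commute)
  have "\<rho> * k \<ge> 0" unfolding k_def using a \<rho> one_less_power[OF \<rho>, of 2] by simp
  moreover have hk: "\<rho> * a / (\<rho>\<^sup>2 - 1) = \<rho> * k" unfolding k_def by simp
  ultimately have "\<rho> * norm z < norm ((a * u1, a * u2) - z) \<longleftrightarrow>
      (norm (z + (k * u1, k * u2)))\<^sup>2 < (\<rho> * k)\<^sup>2"
    unfolding apollonius_ball[OF \<rho>] n c hk by (intro less_iff_power2_less) auto
  then show ?thesis by (cases z) (simp add: norm_Pair)
qed

lemma abs_add_power2_less_iff:
  fixes p k X :: real
  assumes "k \<ge> 0"
  shows "(\<bar>p\<bar> + k)\<^sup>2 < X \<longleftrightarrow> (p + k)\<^sup>2 < X \<and> (p - k)\<^sup>2 < X"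
proof (cases "p \<ge> 0")
  case True
  have "(p - k)\<^sup>2 \<le> (p + k)\<^sup>2" using True assms by (simp add: power2_eq_square algebra_simps)
  then show ?thesis using True by auto
next
  case False
  have "k * p \<le> 0" using False assms by (simp add: mult_nonneg_nonpos)
  then have "(p + k)\<^sup>2 \<le> (p - k)\<^sup>2" by (simp add: power2_eq_square algebra_simps)
  moreover have "(\<bar>p\<bar> + k)\<^sup>2 = (p - k)\<^sup>2" using False by (simp add: power2_eq_square algebra_simps)
  ultimately show ?thesis by auto
qed

section \<open>Area of an intersection of discs\<close>

lemma measure_by_symmetric_slices:
  fixes G :: "(real \<times> real) set" and h :: "real \<Rightarrow> real"
  assumes G: "G \<in> sets borel" and sl: "\<And>p q. (p,q) \<in> G \<longleftrightarrow> \<bar>q\<bar> < h \<bar>p\<bar>"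
    and h0: "\<And>P. 0 \<le> P \<Longrightarrow> 0 \<le> h P" and hm: "\<And>P. m \<le> P \<Longrightarrow> h P = 0" and m: "0 \<le> m"
    and hI: "(h has_integral I) {0..m}"
  shows "measure lborel G = 4 * I"
proof -
  have Gs: "G \<in> sets (lborel \<Otimes>\<^sub>M lborel)" using G by (subst lborel_prod) simp
  have "emeasure lborel G = emeasure (lborel \<Otimes>\<^sub>M (lborel::real measure)) G" by (simp add: lborel_prod)
  also have "\<dots> = (\<integral>\<^sup>+p. emeasure lborel (Pair p -` G) \<partial>lborel)"
    using lborel.emeasure_pair_measure_alt[OF Gs] .
  also have "\<dots> = (\<integral>\<^sup>+p. ennreal (indicator {-m..m} p * (2 * h \<bar>p\<bar>)) \<partial>lborel)"
  proof (rule nn_integral_cong)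
    fix p :: real
    have e: "Pair p -` G = {- h \<bar>p\<bar> <..< h \<bar>p\<bar>}" using sl by auto
    have "emeasure lborel (Pair p -` G) = ennreal (2 * h \<bar>p\<bar>)"
      unfolding e using h0[of "\<bar>p\<bar>"] by simp
    moreover have "\<bar>p\<bar> > m \<Longrightarrow> h \<bar>p\<bar> = 0" using hm by simp
    ultimately show "emeasure lborel (Pair p -` G) = ennreal (indicator {-m..m} p * (2 * h \<bar>p\<bar>))"
      by (cases "p \<in> {-m..m}") (auto simp: indicator_def abs_if split: if_splits)
  qed
  also have "\<dots> = ennreal (4*I)"
  proof -
    have i1: "((\<lambda>p. 2 * h \<bar>p\<bar>) has_integral 2*I) {0..m}"
      by (rule has_integral_cong[THEN iffD1, OF _ has_integral_mult_right[OF hI]]) auto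
    have i2: "((\<lambda>p. 2 * h \<bar>p\<bar>) has_integral 2*I) {-m..0}"
    proof -
      have "((\<lambda>p. (\<lambda>p. 2 * h \<bar>p\<bar>) (-p)) has_integral 2*I) {-m..-0}"
        using i1 by (subst has_integral_reflect_real) simp
      then show ?thesis by simp
    qed
    have "((\<lambda>p. 2 * h \<bar>p\<bar>) has_integral (2*I + 2*I)) {-m..m}"
      using has_integral_combine[OF _ _ i2 i1] m by simp
    then have "(\<integral>\<^sup>+p. ennreal (indicator {-m..m} p * (2 * h \<bar>p\<bar>)) \<partial>lborel) = ennreal (2*I + 2*I)"
      by (intro nn_integral_has_integral_lebesgue) (use h0 in auto)
    then show ?thesis by simp
  qed
  finally have "emeasure lborel G = ennreal (4*I)" .
  moreover have "I \<ge> 0" using has_integral_nonneg[OF hI] h0 by auto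
  ultimately show ?thesis by (simp add: measure_def)
qed

definition circle_primitive :: "real \<Rightarrow> real \<Rightarrow> real" where
  "circle_primitive R u = (u * sqrt (R\<^sup>2 - u\<^sup>2) + R\<^sup>2 * arcsin (u / R)) / 2"

lemma circle_primitive_deriv:
  assumes R: "R > 0" and u: "-R < u" "u < R"
  shows "(circle_primitive R has_real_derivative sqrt (R\<^sup>2 - u\<^sup>2)) (at u)"
proof -
  have "\<bar>u\<bar> < R" using u by auto
  then have "\<bar>u\<bar>^2 < R^2" by (intro power_strict_mono) auto
  then have pos: "R\<^sup>2 - u\<^sup>2 > 0" by simp
  have u1: "-1 < u / R" "u / R < 1" using u R by (auto simp: field_simps)
  have s: "sqrt (1 - (u/R)\<^sup>2) = sqrt (R\<^sup>2 - u\<^sup>2) / R"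
  proof -
    have "1 - (u/R)\<^sup>2 = (R\<^sup>2 - u\<^sup>2) / R\<^sup>2" using R by (simp add: field_simps)
    then show ?thesis using R by (simp add: real_sqrt_divide)
  qed
  have sq: "sqrt (R\<^sup>2 - u\<^sup>2) * sqrt (R\<^sup>2 - u\<^sup>2) = R\<^sup>2 - u\<^sup>2" using pos by simp
  have d1: "((\<lambda>u. sqrt (R\<^sup>2 - u\<^sup>2)) has_real_derivative (- u / sqrt (R\<^sup>2 - u\<^sup>2))) (at u)"
    using pos by (auto intro!: derivative_eq_intros simp: field_simps)
  have d2: "((\<lambda>u. arcsin (u/R)) has_real_derivative (inverse (sqrt (1 - (u/R)\<^sup>2)) * (1/R))) (at u)"
    using u1 R by (auto intro!: derivative_eq_intros DERIV_arcsin simp: field_simps)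
  have d: "(circle_primitive R has_real_derivative
      (u * (- u / sqrt (R\<^sup>2 - u\<^sup>2)) + 1 * sqrt (R\<^sup>2 - u\<^sup>2) + R\<^sup>2 * (inverse (sqrt (1 - (u/R)\<^sup>2)) * (1/R))) / 2) (at u)"
    unfolding circle_primitive_def[abs_def]
    by (intro DERIV_cdivide DERIV_add DERIV_mult' DERIV_cmult d1 d2 DERIV_ident)
  have e: "(u * (- u / sqrt (R\<^sup>2 - u\<^sup>2)) + 1 * sqrt (R\<^sup>2 - u\<^sup>2) + R\<^sup>2 * (inverse (sqrt (1 - (u/R)\<^sup>2)) * (1/R))) / 2
     = sqrt (R\<^sup>2 - u\<^sup>2)"
    unfolding s using pos R sq by (simp add: field_simps power2_eq_square)
  from d[unfolded e] show ?thesis .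
qed

lemma has_integral_circle_primitive:
  assumes R: "R > 0" and ab: "a \<le> b" and d: "-R \<le> a + d" "b + d \<le> R"
  shows "((\<lambda>p. sqrt (R\<^sup>2 - (p+d)\<^sup>2)) has_integral (circle_primitive R (b+d) - circle_primitive R (a+d))) {a..b}"
proof -
  have "((\<lambda>p. sqrt (R\<^sup>2 - (p+d)\<^sup>2)) has_integral ((\<lambda>p. circle_primitive R (p+d)) b - (\<lambda>p. circle_primitive R (p+d)) a)) {a..b}"
  proof (rule fundamental_theorem_of_calculus_interior[OF ab])
    show "continuous_on {a..b} (\<lambda>p. circle_primitive R (p + d))"
      unfolding circle_primitive_def
    proof (intro continuous_intros ballI conjI)
      fix x assume "x \<in> {a..b}"
      then have "-R \<le> x + d" "x + d \<le> R" using d by auto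
      then show "-1 \<le> (x+d)/R" "(x+d)/R \<le> 1" using R by (auto simp: field_simps)
    qed (use R in auto)
  next
    fix x assume x: "x \<in> {a<..<b}"
    then have "-R < x + d" "x + d < R" using d by auto
    from circle_primitive_deriv[OF R this] have "((\<lambda>p. circle_primitive R (p+d)) has_real_derivative sqrt (R\<^sup>2 - (x+d)\<^sup>2) * 1) (at x)"
      by (intro DERIV_chain2[where f="circle_primitive R" and g="\<lambda>p. p + d"]) (auto intro!: derivative_eq_intros)
    then show "((\<lambda>p. circle_primitive R (p + d)) has_vector_derivative sqrt (R\<^sup>2 - (x+d)\<^sup>2)) (at x)"
      by (simp add: has_real_derivative_iff_has_vector_derivative)
  qed
  then show ?thesis by simp
qed

lemma arctan_diff:
  fixes x y :: real
  assumes "0 \<le> x" "0 \<le> y"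
  shows "arctan x - arctan y = arctan ((x - y) / (1 + x * y))"
proof -
  define d where "d = arctan x - arctan y"
  have b: "- (pi/2) < d" "d < pi/2"
    using arctan_bounded[of x] arctan_bounded[of y] assms unfolding d_def
    by (auto simp del: zero_le_arctan_iff intro: order.trans)
       (use zero_le_arctan_iff[of x] zero_le_arctan_iff[of y] in linarith)+
  have "cos d \<noteq> 0" using b by (intro less_imp_neq[symmetric] cos_gt_zero_pi) auto
  then have "tan d = (x - y) / (1 + x * y)"
    unfolding d_def by (subst tan_diff) (auto simp: tan_arctan d_def)
  then have "arctan ((x - y) / (1 + x * y)) = d" using arctan_tan[OF b] by simp
  then show ?thesis unfolding d_def by simp
qed

lemma arctan_sqrt3: "arctan (sqrt 3) = pi/3"
proof (rule arctan_unique)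
  show "- (pi / 2) < pi / 3" using pi_gt_zero by linarith
qed (use pi_gt_zero in \<open>auto simp: tan_60\<close>)

lemma arctan_inv_sqrt3: "arctan (1 / sqrt 3) = pi/6"
  by (rule arctan_unique) (use pi_gt_zero in \<open>auto simp: tan_30\<close>)

lemma arctan_inverse_pos: "0 < x \<Longrightarrow> arctan (1/x) = pi/2 - arctan x"
  using arctan_inverse[of x] by (simp add: inverse_eq_divide)

lemma circle_primitive_arctan:
  assumes R: "R > 0" and v: "v > 0" and uv: "u\<^sup>2 + v\<^sup>2 = R\<^sup>2"
  shows "circle_primitive R u = (u * v + R\<^sup>2 * arctan (u / v)) / 2"
proof -
  have "R\<^sup>2 - u\<^sup>2 = v\<^sup>2" using uv by simp
  then have sv: "sqrt (R\<^sup>2 - u\<^sup>2) = v" using v by simp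
  have "v\<^sup>2 > 0" using v by simp
  then have "u\<^sup>2 < R\<^sup>2" using uv by linarith
  then have "\<bar>u\<bar> < R" using R by (metis abs_of_pos power2_abs power_less_imp_less_base abs_ge_zero)
  then have u1: "-1 < u/R" "u/R < 1" using R by (auto simp: field_simps abs_less_iff)
  have "sqrt (1 - (u/R)\<^sup>2) = v / R"
  proof -
    have "1 - (u/R)\<^sup>2 = (v/R)\<^sup>2" using uv R by (simp add: field_simps)
    then show ?thesis using v R by simp
  qed
  then have "arcsin (u/R) = arctan (u / v)" using arcsin_arctan[OF u1] R v by (simp add: field_simps)
  then show ?thesis unfolding circle_primitive_def sv by simp
qed

lemma circle_primitive_radius: "R > 0 \<Longrightarrow> circle_primitive R R = R\<^sup>2 * pi / 4"
  unfolding circle_primitive_def by simp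

lemma circle_primitive_0: "circle_primitive R 0 = 0"
  unfolding circle_primitive_def by simp

text \<open>The intersection of the open discs of radius \<open>R\<close> centred at \<open>(\<plusminus>k, 0)\<close> and \<open>(\<plusminus>kx, \<plusminus>ky)\<close>.\<close>

definition disc_cell :: "real \<Rightarrow> real \<Rightarrow> real \<Rightarrow> real \<Rightarrow> (real \<times> real) set" where
  "disc_cell k kx ky R =
     {z. (\<bar>fst z\<bar> + k)\<^sup>2 + (snd z)\<^sup>2 < R\<^sup>2 \<and> (\<bar>fst z\<bar> + kx)\<^sup>2 + (\<bar>snd z\<bar> + ky)\<^sup>2 < R\<^sup>2}"

definition disc_cell_height :: "real \<Rightarrow> real \<Rightarrow> real \<Rightarrow> real \<Rightarrow> real \<Rightarrow> real \<Rightarrow> real" where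
  "disc_cell_height k kx ky R c p =
     (if p \<le> c then sqrt (R\<^sup>2 - (p + kx)\<^sup>2) - ky else if p < R - k then sqrt (R\<^sup>2 - (p + k)\<^sup>2) else 0)"

lemma open_disc_cell: "open (disc_cell k kx ky R)"
  unfolding disc_cell_def by (intro open_Collect_conj open_Collect_less continuous_intros)

lemma less_sqrt_iff_power2_less: "0 \<le> x \<Longrightarrow> x < sqrt y \<longleftrightarrow> x\<^sup>2 < y"
  by (metis abs_of_nonneg real_less_rsqrt real_sqrt_abs real_sqrt_less_iff)

text \<open>In the first quadrant the boundary circles centred at \<open>(-k, 0)\<close> and \<open>(-kx, -ky)\<close> meet on
  the line \<open>q = t p\<close>, at the abscissa \<open>c\<close>; left of \<open>c\<close> the second circle bounds the cell, right of it
  the first one does.\<close>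

context
  fixes k kx ky R t c :: real
  assumes k: "0 < k" and kx: "0 \<le> kx" and ky: "0 < ky" and kk: "kx\<^sup>2 + ky\<^sup>2 = k\<^sup>2"
    and R: "k < R" and t: "0 < t" "t * ky = k - kx" and c: "0 < c" "c < R - k"
    and ceq: "t\<^sup>2 * c\<^sup>2 + (c + k)\<^sup>2 = R\<^sup>2"
begin

lemma disc_cell_circles_difference:
  "(p + kx)\<^sup>2 + (q + ky)\<^sup>2 - ((p + k)\<^sup>2 + q\<^sup>2) = 2 * ky * (q - t * p)"
proof -
  have "(p + kx)\<^sup>2 + (q + ky)\<^sup>2 - ((p + k)\<^sup>2 + q\<^sup>2) = 2*ky*q - 2*(k - kx)*p + (kx\<^sup>2 + ky\<^sup>2 - k\<^sup>2)"
    by (simp add: power2_eq_square algebra_simps)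
  also have "\<dots> = 2 * ky * (q - t * p)" using kk t(2)[symmetric] by (simp add: algebra_simps)
  finally show ?thesis .
qed

lemma disc_cell_corner: "(c + kx)\<^sup>2 + (t * c + ky)\<^sup>2 = R\<^sup>2"
  using disc_cell_circles_difference[of c "t * c"] ceq by (simp add: power_mult_distrib algebra_simps)

lemma disc_cell_slice_inner:
  assumes p: "0 \<le> p" "p \<le> c" and q: "0 \<le> q"
  shows "q < sqrt (R\<^sup>2 - (p + kx)\<^sup>2) - ky \<longleftrightarrow> (p + k)\<^sup>2 + q\<^sup>2 < R\<^sup>2 \<and> (p + kx)\<^sup>2 + (q + ky)\<^sup>2 < R\<^sup>2"
proof -
  have "(p + k)\<^sup>2 + q\<^sup>2 < R\<^sup>2" if inner: "(p + kx)\<^sup>2 + (q + ky)\<^sup>2 < R\<^sup>2"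
  proof (cases "t * p \<le> q")
    case True
    then show ?thesis using disc_cell_circles_difference[of p q] inner ky
      by (smt (verit) mult_nonneg_nonneg)
  next
    case False
    then have "q\<^sup>2 < (t * p)\<^sup>2" using q by (intro power_strict_mono) auto
    moreover have "(t * p)\<^sup>2 \<le> (t * c)\<^sup>2" "(p + k)\<^sup>2 \<le> (c + k)\<^sup>2" using p t k by (intro power_mono; simp)+
    ultimately show ?thesis using ceq by (simp add: power_mult_distrib)
  qed
  moreover have "q < sqrt (R\<^sup>2 - (p + kx)\<^sup>2) - ky \<longleftrightarrow> (q + ky)\<^sup>2 < R\<^sup>2 - (p + kx)\<^sup>2"
    using less_sqrt_iff_power2_less[of "q + ky" "R\<^sup>2 - (p + kx)\<^sup>2"] q ky by linarith
  ultimately show ?thesis by linarith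
qed

lemma disc_cell_slice_outer:
  assumes p: "c < p" and q: "0 \<le> q"
  shows "q < sqrt (R\<^sup>2 - (p + k)\<^sup>2) \<longleftrightarrow> (p + k)\<^sup>2 + q\<^sup>2 < R\<^sup>2 \<and> (p + kx)\<^sup>2 + (q + ky)\<^sup>2 < R\<^sup>2"
proof -
  have "(p + kx)\<^sup>2 + (q + ky)\<^sup>2 < R\<^sup>2" if outer: "(p + k)\<^sup>2 + q\<^sup>2 < R\<^sup>2"
  proof (cases "q \<le> t * p")
    case True
    then show ?thesis using disc_cell_circles_difference[of p q] outer ky
      by (smt (verit) mult_nonneg_nonpos)
  next
    case False
    then have "(t * p)\<^sup>2 < q\<^sup>2" using p t c by (intro power_strict_mono) auto
    moreover have "(t * c)\<^sup>2 \<le> (t * p)\<^sup>2" "(c + k)\<^sup>2 \<le> (p + k)\<^sup>2" using p c t k by (intro power_mono; simp)+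
    ultimately show ?thesis using ceq outer by (simp add: power_mult_distrib)
  qed
  moreover have "q < sqrt (R\<^sup>2 - (p + k)\<^sup>2) \<longleftrightarrow> q\<^sup>2 < R\<^sup>2 - (p + k)\<^sup>2"
    using less_sqrt_iff_power2_less[of q "R\<^sup>2 - (p + k)\<^sup>2"] q by linarith
  ultimately show ?thesis by linarith
qed

lemma mem_disc_cell_iff_height:
  "(p, q) \<in> disc_cell k kx ky R \<longleftrightarrow> \<bar>q\<bar> < disc_cell_height k kx ky R c \<bar>p\<bar>"
proof -
  consider "\<bar>p\<bar> \<le> c" | "c < \<bar>p\<bar>" "\<bar>p\<bar> < R - k" | "R - k \<le> \<bar>p\<bar>" by linarith
  then show ?thesis
  proof cases
    case 1
    then show ?thesis
      using disc_cell_slice_inner[of "\<bar>p\<bar>" "\<bar>q\<bar>"] by (simp add: disc_cell_def disc_cell_height_def)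
  next
    case 2
    then show ?thesis
      using disc_cell_slice_outer[of "\<bar>p\<bar>" "\<bar>q\<bar>"] by (simp add: disc_cell_def disc_cell_height_def)
  next
    case 3
    then have "R\<^sup>2 \<le> (\<bar>p\<bar> + k)\<^sup>2" using R k by (intro power_mono) auto
    then have "\<not> (\<bar>p\<bar> + k)\<^sup>2 + q\<^sup>2 < R\<^sup>2" using zero_le_power2[of q] by linarith
    then show ?thesis using 3 c by (simp add: disc_cell_def disc_cell_height_def)
  qed
qed

lemma disc_cell_height_nonneg:
  assumes "0 \<le> p"
  shows "0 \<le> disc_cell_height k kx ky R c p"
proof (cases "p \<le> c")
  case True
  have "(p + kx)\<^sup>2 \<le> (c + kx)\<^sup>2" "ky\<^sup>2 \<le> (t * c + ky)\<^sup>2"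
    using True assms kx ky t c by (intro power_mono; simp)+
  then have "sqrt (ky\<^sup>2) \<le> sqrt (R\<^sup>2 - (p + kx)\<^sup>2)"
    using disc_cell_corner by (intro real_sqrt_le_mono) linarith
  then show ?thesis using True ky unfolding disc_cell_height_def by simp
next
  case False
  have "p < R - k \<Longrightarrow> (p + k)\<^sup>2 \<le> R\<^sup>2" using assms k by (intro power_mono) auto
  then show ?thesis using False unfolding disc_cell_height_def by auto
qed

lemma has_integral_disc_cell_height:
  "(disc_cell_height k kx ky R c has_integral
     (circle_primitive R (c + kx) - circle_primitive R kx - c * ky)
     + (circle_primitive R R - circle_primitive R (c + k))) {0..R - k}"
proof -
  have "(c + kx)\<^sup>2 \<le> R\<^sup>2" using disc_cell_corner by (smt (verit) zero_le_power2)
  then have ckx: "c + kx \<le> R" using R k by (simp add: abs_le_square_iff[symmetric])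
  have "((\<lambda>p. sqrt (R\<^sup>2 - (p + kx)\<^sup>2) - ky) has_integral
      (circle_primitive R (c + kx) - circle_primitive R (0 + kx) - c * ky)) {0..c}"
    using has_integral_const_real[of ky 0 c] c kx ckx R k
    by (intro has_integral_diff has_integral_circle_primitive) auto
  from this[unfolded add_0_left] have inner: "(disc_cell_height k kx ky R c has_integral
      (circle_primitive R (c + kx) - circle_primitive R kx - c * ky)) {0..c}"
    by (rule has_integral_eq[rotated]) (auto simp: disc_cell_height_def)
  have "((\<lambda>p. sqrt (R\<^sup>2 - (p + k)\<^sup>2)) has_integral
      (circle_primitive R (R - k + k) - circle_primitive R (c + k))) {c..R - k}"
    using c k by (intro has_integral_circle_primitive) auto
  from this[unfolded diff_add_cancel] have outer: "(disc_cell_height k kx ky R c has_integral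
      (circle_primitive R R - circle_primitive R (c + k))) {c..R - k}"
    by (rule has_integral_spike_finite[where S="{c, R - k}", rotated 2])
      (auto simp: disc_cell_height_def)
  show ?thesis using has_integral_combine[OF _ _ inner outer] c by simp
qed

lemma measure_disc_cell:
  "measure lborel (disc_cell k kx ky R) =
     4 * ((circle_primitive R (c + kx) - circle_primitive R kx - c * ky)
          + (circle_primitive R R - circle_primitive R (c + k)))"
  using c disc_cell_height_nonneg
  by (intro measure_by_symmetric_slices[OF borel_open[OF open_disc_cell] mem_disc_cell_iff_height
        _ _ _ has_integral_disc_cell_height]) (auto simp: disc_cell_height_def)

end

section \<open>Area of the square-lattice cell\<close>

definition square_fraction :: "real \<Rightarrow> real" where
  "square_fraction \<rho> = (4 * \<rho>\<^sup>2 * arctan ((sqrt (2*\<rho>\<^sup>2 - 1) - 1) / (sqrt (2*\<rho>\<^sup>2 - 1) + 1))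
               - 2 * sqrt (2*\<rho>\<^sup>2 - 1) + 2) / (\<rho>\<^sup>2 - 1)\<^sup>2"

lemma measure_square_disc_cell_arctan:
  fixes k \<rho> :: real
  assumes k: "k > 0" and \<rho>: "\<rho> > 1"
  defines "s \<equiv> sqrt (2*\<rho>\<^sup>2 - 1)"
  shows "measure lborel (disc_cell k 0 k (\<rho> * k))
           = 4 * ((\<rho> * k)\<^sup>2 * arctan ((s - 1) / (s + 1)) - k\<^sup>2 * (s - 1) / 2)"
proof -
  define R where "R = \<rho> * k"
  define c where "c = k * (s - 1) / 2"
  have r1: "\<rho>\<^sup>2 > 1" using \<rho> by (metis one_less_power zero_less_numeral pos2)
  have s2: "s\<^sup>2 = 2*\<rho>\<^sup>2 - 1" unfolding s_def using r1 by simp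
  have s1: "s > 1" unfolding s_def using r1 by (simp add: real_less_rsqrt)
  have R: "k < R" "R > 0" unfolding R_def using k \<rho> by simp_all
  have c0: "0 < c" unfolding c_def using k s1 by simp
  have "(2*\<rho> - 1)\<^sup>2 - s\<^sup>2 = 2 * (\<rho> - 1)\<^sup>2" using s2 by (simp add: power2_eq_square algebra_simps)
  moreover have "(\<rho> - 1)\<^sup>2 > 0" using \<rho> by simp
  ultimately have "s\<^sup>2 < (2*\<rho> - 1)\<^sup>2" by linarith
  then have "s + 1 < 2 * \<rho>" using power2_less_imp_less \<rho> by force
  then have "k * (s + 1) < k * (2 * \<rho>)" using k by (rule mult_strict_left_mono)
  then have cm: "c < R - k" unfolding c_def R_def by (simp add: field_simps)
  have ceq: "1\<^sup>2 * c\<^sup>2 + (c + k)\<^sup>2 = R\<^sup>2"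
  proof -
    have "1\<^sup>2 * c\<^sup>2 + (c + k)\<^sup>2 = k\<^sup>2 * (s\<^sup>2 + 1) / 2"
      unfolding c_def by (simp add: power2_eq_square field_simps)
    also have "\<dots> = R\<^sup>2" unfolding s2 R_def by (simp add: power_mult_distrib)
    finally show ?thesis .
  qed
  have ck: "c + k = k * (s + 1) / 2" unfolding c_def by (simp add: field_simps)
  define \<theta> where "\<theta> = arctan (c / (c + k))"
  have \<theta>: "\<theta> = arctan ((s - 1) / (s + 1))"
    unfolding \<theta>_def ck unfolding c_def using k s1 by (simp add: divide_simps)
  have "circle_primitive R c = (c * (c + k) + R\<^sup>2 * \<theta>) / 2"
    unfolding \<theta>_def by (rule circle_primitive_arctan) (use R c0 k ceq in simp_all)
  moreover have "circle_primitive R (c + k) = ((c + k) * c + R\<^sup>2 * (pi/2 - \<theta>)) / 2"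
    unfolding \<theta>_def using arctan_inverse_pos[of "c / (c + k)"] c0 k
    by (subst circle_primitive_arctan[where v=c]) (use R c0 k ceq in \<open>simp_all add: add.commute\<close>)
  moreover have "measure lborel (disc_cell k 0 k R) = 4 * ((circle_primitive R (c + 0) - circle_primitive R 0
      - c * k) + (circle_primitive R R - circle_primitive R (c + k)))"
    by (rule measure_disc_cell[where t=1]) (use k R c0 cm ceq in simp_all)
  ultimately have "measure lborel (disc_cell k 0 k R) = 4 * (R\<^sup>2 * \<theta> - c * k)"
    by (simp add: circle_primitive_0 circle_primitive_radius[OF R(2)] field_simps)
  then show ?thesis unfolding \<theta> R_def c_def by (simp add: power2_eq_square)
qed

lemma measure_square_disc_cell:
  fixes k \<rho> :: real
  assumes k: "k > 0" and \<rho>: "\<rho> > 1"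
  shows "measure lborel (disc_cell k 0 k (\<rho> * k)) = (k * (\<rho>\<^sup>2 - 1))\<^sup>2 * square_fraction \<rho>"
proof -
  define s where "s = sqrt (2*\<rho>\<^sup>2 - 1)"
  define A where "A = arctan ((s - 1) / (s + 1))"
  have "(\<rho>\<^sup>2 - 1)\<^sup>2 \<noteq> 0" using \<rho> by (metis less_irrefl one_less_power zero_less_numeral eq_iff_diff_eq_0
      power_eq_0_iff)
  then have "(k * (\<rho>\<^sup>2 - 1))\<^sup>2 * square_fraction \<rho> = k\<^sup>2 * (4 * \<rho>\<^sup>2 * A - 2 * s + 2)"
    unfolding square_fraction_def s_def[symmetric] A_def[symmetric] by (simp add: power_mult_distrib)
  also have "\<dots> = 4 * ((\<rho> * k)\<^sup>2 * A - k\<^sup>2 * (s - 1) / 2)"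
    by (simp add: power_mult_distrib field_simps)
  finally show ?thesis unfolding measure_square_disc_cell_arctan[OF k \<rho>] s_def A_def by simp
qed

lemma measure_square_disc_cell_less:
  fixes k \<rho> :: real
  assumes k: "k > 0" and \<rho>: "\<rho> > 1"
  shows "measure lborel (disc_cell k 0 k (\<rho> * k)) < 4 * (\<rho> * k - k)\<^sup>2"
proof -
  define s where "s = sqrt (2*\<rho>\<^sup>2 - 1)"
  have r1: "\<rho>\<^sup>2 > 1" using \<rho> by (metis one_less_power zero_less_numeral pos2)
  have s2: "s\<^sup>2 = 2*\<rho>\<^sup>2 - 1" unfolding s_def using r1 by simp
  have s1: "s > 1" unfolding s_def using r1 by (simp add: real_less_rsqrt)
  have "(2*\<rho> - 1)\<^sup>2 - s\<^sup>2 = 2 * (\<rho> - 1)\<^sup>2" using s2 by (simp add: power2_eq_square algebra_simps)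
  moreover have "(\<rho> - 1)\<^sup>2 > 0" using \<rho> by simp
  ultimately have "s\<^sup>2 < (2*\<rho> - 1)\<^sup>2" by linarith
  then have "s \<noteq> 2*\<rho> - 1" by auto
  have "arctan ((s - 1) / (s + 1)) \<le> (s - 1) / (s + 1)" by (rule arctan_le_self) (use s1 in simp)
  then have "(\<rho> * k)\<^sup>2 * arctan ((s - 1) / (s + 1)) \<le> (\<rho> * k)\<^sup>2 * ((s - 1) / (s + 1))"
    by (rule mult_left_mono) simp
  moreover have "(\<rho> * k)\<^sup>2 * ((s - 1) / (s + 1)) - k\<^sup>2 * (s - 1) / 2 < (\<rho> * k - k)\<^sup>2"
  proof -
    have "(\<rho> * k - k)\<^sup>2 - ((\<rho> * k)\<^sup>2 * ((s - 1) / (s + 1)) - k\<^sup>2 * (s - 1) / 2)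
        = k\<^sup>2 * (2*\<rho> - s - 1)\<^sup>2 / (2 * (s + 1))"
      using s1 s2 by (simp add: divide_simps power2_eq_square) (simp add: algebra_simps)
    moreover have "2*\<rho> - s - 1 \<noteq> 0" using \<open>s \<noteq> 2*\<rho> - 1\<close> by linarith
    ultimately show ?thesis using k s1 by (smt (verit) divide_pos_pos zero_less_power2 mult_pos_pos)
  qed
  ultimately have "(\<rho> * k)\<^sup>2 * arctan ((s - 1) / (s + 1)) - k\<^sup>2 * (s - 1) / 2 < (\<rho> * k - k)\<^sup>2"
    by linarith
  then show ?thesis unfolding measure_square_disc_cell_arctan[OF k \<rho>] s_def[symmetric]
    by (rule mult_strict_left_mono) simp
qed

section \<open>Area of the triangular-lattice cell\<close>

text \<open>Polynomial identities in \<open>q = sqrt 3\<close> and \<open>r = sqrt (4 \<rho>\<^sup>2 - 1)\<close> are verified by \<open>algebra\<close> from an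
  explicit certificate \<open>(A, B)\<close> for the first premise.\<close>

lemma eq_by_radical_relations:
  fixes P Q A B q r \<rho> :: real
  assumes "P - Q = (q\<^sup>2 - 3) * A + (r\<^sup>2 - 4*\<rho>\<^sup>2 + 1) * B" "q\<^sup>2 = 3" "r\<^sup>2 = 4*\<rho>\<^sup>2 - 1"
  shows "P = Q"
  using assms by simp

definition triangular_fraction :: "real \<Rightarrow> real" where
  "triangular_fraction \<rho> =
     (4 * sqrt 3 * \<rho>\<^sup>2 * arctan ((sqrt (4*\<rho>\<^sup>2 - 1) - sqrt 3) / (sqrt 3 * sqrt (4*\<rho>\<^sup>2 - 1) + 1))
      - sqrt 3 * sqrt (4*\<rho>\<^sup>2 - 1) + 3) / (\<rho>\<^sup>2 - 1)\<^sup>2"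

lemma triangular_radical_bounds:
  fixes \<rho> :: real
  assumes \<rho>: "\<rho> > 1"
  defines "r \<equiv> sqrt (4*\<rho>\<^sup>2 - 1)"
  shows "sqrt 3 < r" "3 < sqrt 3 * r" "sqrt 3 * r < 4*\<rho> - 1"
proof -
  define q where "q = sqrt 3"
  have r1: "\<rho>\<^sup>2 > 1" using \<rho> by (metis one_less_power zero_less_numeral pos2)
  have q2: "q\<^sup>2 = 3" and q0: "q > 0" unfolding q_def by auto
  have r2: "r\<^sup>2 = 4*\<rho>\<^sup>2 - 1" and r0: "r > 0" unfolding r_def using r1 by auto
  have "q\<^sup>2 < r\<^sup>2" using q2 r2 r1 by simp
  then show rq: "sqrt 3 < r" unfolding q_def[symmetric] by (rule power2_less_imp_less) (use r0 in simp)
  have "q * q < q * r" using rq q0 unfolding q_def by (intro mult_strict_left_mono) auto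
  then show "3 < sqrt 3 * r" using q2 unfolding q_def by (simp add: power2_eq_square)
  have "(4*\<rho> - 1)\<^sup>2 - (q*r)\<^sup>2 = 4 * (\<rho> - 1)\<^sup>2"
    by (rule eq_by_radical_relations[where A="- r\<^sup>2" and B="- 3" and q=q and r=r and \<rho>=\<rho>],
        algebra, rule q2, rule r2)
  moreover have "(\<rho> - 1)\<^sup>2 > 0" using \<rho> by simp
  ultimately have "(q*r)\<^sup>2 < (4*\<rho> - 1)\<^sup>2" by linarith
  then show "sqrt 3 * r < 4*\<rho> - 1" unfolding q_def by (rule power2_less_imp_less) (use \<rho> in simp)
qed

lemma measure_triangular_disc_cell_primitives:
  fixes k \<rho> :: real
  assumes k: "k > 0" and \<rho>: "\<rho> > 1"
  defines "R \<equiv> \<rho> * k" and "c \<equiv> k * (sqrt 3 * sqrt (4*\<rho>\<^sup>2 - 1) - 3) / 4"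
  shows "measure lborel (disc_cell k (k/2) (k * sqrt 3 / 2) R) =
    4 * ((circle_primitive R (c + k/2) - circle_primitive R (k/2) - c * (k * sqrt 3 / 2))
         + (circle_primitive R R - circle_primitive R (c + k)))"
proof (rule measure_disc_cell[where t="1 / sqrt 3"])
  define q where "q = sqrt 3"
  define r where "r = sqrt (4*\<rho>\<^sup>2 - 1)"
  note bounds = triangular_radical_bounds[OF \<rho>, folded q_def r_def]
  have r1: "\<rho>\<^sup>2 > 1" using \<rho> by (metis one_less_power zero_less_numeral pos2)
  have q2: "q\<^sup>2 = 3" and q0: "q > 0" unfolding q_def by auto
  have r2: "r\<^sup>2 = 4*\<rho>\<^sup>2 - 1" unfolding r_def using r1 by auto
  show "k < R" unfolding R_def using k \<rho> by simp
  show "0 < c" unfolding c_def r_def[symmetric] using k bounds(2) by (simp add: q_def)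
  have "k * (q*r - 3) < k * (4*\<rho> - 4)" using k bounds(3) by (intro mult_strict_left_mono) auto
  then show "c < R - k" unfolding c_def R_def q_def[symmetric] r_def[symmetric] by (simp add: field_simps)
  show "(k/2)\<^sup>2 + (k * sqrt 3 / 2)\<^sup>2 = k\<^sup>2" by (simp add: power_mult_distrib power_divide field_simps)
  show "1 / sqrt 3 * (k * sqrt 3 / 2) = k - k/2" by simp
  have "(k*(q*r-3))\<^sup>2 + 3 * (k*(q*r-3) + 4*k)\<^sup>2 = 48 * (\<rho>*k)\<^sup>2"
    by (rule eq_by_radical_relations[where A="4*r\<^sup>2*k\<^sup>2" and B="12*k\<^sup>2" and q=q and r=r and \<rho>=\<rho>],
        algebra, rule q2, rule r2)
  then show "(1 / sqrt 3)\<^sup>2 * c\<^sup>2 + (c + k)\<^sup>2 = R\<^sup>2"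
    unfolding c_def R_def q_def[symmetric] r_def[symmetric] using q2 q0
    by (simp add: power_divide power_mult_distrib field_simps)
qed (use k in auto)

lemma triangular_arctan_identities:
  fixes r :: real
  assumes r: "sqrt 3 < r"
  shows "arctan ((r - sqrt 3) / (sqrt 3 * r + 1)) = arctan r - pi/3"
    and "arctan ((sqrt 3 * r - 1) / (r + sqrt 3)) = arctan r - pi/6"
    and "arctan ((sqrt 3 * r + 1) / (r - sqrt 3)) = 5 * pi/6 - arctan r"
proof -
  define q where "q = sqrt 3"
  have q0: "q > 0" unfolding q_def by simp
  have rq: "q < r" unfolding q_def using r .
  have r0: "r > 0" using q0 rq by linarith
  have qr: "q * r + 1 > 0" using q0 r0 by (simp add: add_pos_pos)
  have "arctan r - arctan q = arctan ((r - q) / (1 + r * q))" by (rule arctan_diff) (use r0 q0 in auto)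
  then show X: "arctan ((r - sqrt 3) / (sqrt 3 * r + 1)) = arctan r - pi/3"
    unfolding q_def[symmetric] using arctan_sqrt3 by (simp add: q_def algebra_simps)
  have "(r - 1/q) / (1 + r * (1/q)) = ((r - 1/q) * q) / ((1 + r * (1/q)) * q)" using q0 by simp
  also have "\<dots> = (q * r - 1) / (r + q)" using q0 by (simp add: algebra_simps)
  finally have "(q * r - 1) / (r + q) = (r - 1/q) / (1 + r * (1/q))" ..
  then show "arctan ((sqrt 3 * r - 1) / (r + sqrt 3)) = arctan r - pi/6"
    unfolding q_def[symmetric] using arctan_diff[of r "1/q"] r0 q0 arctan_inv_sqrt3
    by (simp add: q_def)
  have "(q * r + 1) / (r - q) = 1 / ((r - q) / (q * r + 1))" using rq qr by simp
  then show "arctan ((sqrt 3 * r + 1) / (r - sqrt 3)) = 5 * pi/6 - arctan r"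
    unfolding q_def[symmetric] using arctan_inverse_pos[of "(r - q) / (q * r + 1)"] rq qr X
    by (simp add: q_def)
qed

lemma circle_primitive_triangular_points:
  fixes k \<rho> :: real
  assumes k: "k > 0" and \<rho>: "\<rho> > 1"
  defines "q \<equiv> sqrt 3" and "r \<equiv> sqrt (4*\<rho>\<^sup>2 - 1)" and "R \<equiv> \<rho> * k"
  shows "circle_primitive R (k*(q*r-1)/4) = (k*(q*r-1)/4 * (k*(r+q)/4) + R\<^sup>2 * (arctan r - pi/6)) / 2"
    and "circle_primitive R (k/2) = (k/2 * (k*r/2) + R\<^sup>2 * (pi/2 - arctan r)) / 2"
    and "circle_primitive R (k*(q*r+1)/4) = (k*(q*r+1)/4 * (k*(r-q)/4) + R\<^sup>2 * (5*pi/6 - arctan r)) / 2"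
proof -
  have r1: "\<rho>\<^sup>2 > 1" using \<rho> by (metis one_less_power zero_less_numeral pos2)
  have q2: "q\<^sup>2 = 3" and q0: "q > 0" unfolding q_def by auto
  have r2: "r\<^sup>2 = 4*\<rho>\<^sup>2 - 1" and r0: "r > 0" unfolding r_def using r1 by auto
  have rq: "q < r" using triangular_radical_bounds(1)[OF \<rho>] unfolding q_def r_def .
  have R0: "R > 0" unfolding R_def using k \<rho> by simp
  note arctans = triangular_arctan_identities[OF rq[unfolded q_def], folded q_def]
  have "(k*(q*r-1))\<^sup>2 + (k*(r+q))\<^sup>2 = 16*(\<rho>*k)\<^sup>2"
    by (rule eq_by_radical_relations[where A="k\<^sup>2 + r\<^sup>2*k\<^sup>2" and B="4*k\<^sup>2" and q=q and r=r and \<rho>=\<rho>],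
        algebra, rule q2, rule r2)
  then have "(k*(q*r-1)/4)\<^sup>2 + (k*(r+q)/4)\<^sup>2 = R\<^sup>2" unfolding R_def by (simp add: power_divide power_mult_distrib)
  moreover have "arctan ((k*(q*r-1)/4) / (k*(r+q)/4)) = arctan r - pi/6" using k arctans(2) by simp
  ultimately show "circle_primitive R (k*(q*r-1)/4) = (k*(q*r-1)/4 * (k*(r+q)/4) + R\<^sup>2 * (arctan r - pi/6)) / 2"
    using circle_primitive_arctan[OF R0, of "k*(r+q)/4" "k*(q*r-1)/4"] k r0 q0 by simp
  have "k\<^sup>2 + (k*r)\<^sup>2 = 4*(\<rho>*k)\<^sup>2"
    by (rule eq_by_radical_relations[where A="0" and B="k\<^sup>2" and q=q and r=r and \<rho>=\<rho>],
        algebra, rule q2, rule r2)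
  then have "(k/2)\<^sup>2 + (k*r/2)\<^sup>2 = R\<^sup>2" unfolding R_def by (simp add: power_divide power_mult_distrib)
  moreover have "arctan ((k/2) / (k*r/2)) = pi/2 - arctan r" using k arctan_inverse_pos[OF r0] by simp
  ultimately show "circle_primitive R (k/2) = (k/2 * (k*r/2) + R\<^sup>2 * (pi/2 - arctan r)) / 2"
    using circle_primitive_arctan[OF R0, of "k*r/2" "k/2"] k r0 by simp
  have "(k*(q*r+1))\<^sup>2 + (k*(r-q))\<^sup>2 = 16*(\<rho>*k)\<^sup>2"
    by (rule eq_by_radical_relations[where A="k\<^sup>2 + r\<^sup>2*k\<^sup>2" and B="4*k\<^sup>2" and q=q and r=r and \<rho>=\<rho>],
        algebra, rule q2, rule r2)
  then have "(k*(q*r+1)/4)\<^sup>2 + (k*(r-q)/4)\<^sup>2 = R\<^sup>2" unfolding R_def by (simp add: power_divide power_mult_distrib)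
  moreover have "arctan ((k*(q*r+1)/4) / (k*(r-q)/4)) = 5*pi/6 - arctan r" using k arctans(3) by simp
  ultimately show "circle_primitive R (k*(q*r+1)/4)
      = (k*(q*r+1)/4 * (k*(r-q)/4) + R\<^sup>2 * (5*pi/6 - arctan r)) / 2"
    using circle_primitive_arctan[OF R0, of "k*(r-q)/4" "k*(q*r+1)/4"] k rq by simp
qed

lemma measure_triangular_disc_cell_arctan:
  fixes k \<rho> :: real
  assumes k: "k > 0" and \<rho>: "\<rho> > 1"
  defines "r \<equiv> sqrt (4*\<rho>\<^sup>2 - 1)"
  shows "measure lborel (disc_cell k (k/2) (k * sqrt 3 / 2) (\<rho> * k))
           = 6 * (\<rho> * k)\<^sup>2 * arctan ((r - sqrt 3) / (sqrt 3 * r + 1)) + k\<^sup>2 * (3 * sqrt 3 - 3 * r) / 2"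
proof -
  define q where "q = sqrt 3"
  define R where "R = \<rho> * k"
  define c where "c = k * (q * r - 3) / 4"
  have q2: "q\<^sup>2 = 3" unfolding q_def by simp
  have r2: "r\<^sup>2 = 4*\<rho>\<^sup>2 - 1" unfolding r_def using one_less_power[OF \<rho>, of 2] by simp
  have R0: "R > 0" unfolding R_def using k \<rho> by simp
  note prim = circle_primitive_triangular_points[OF k \<rho>, folded q_def r_def R_def]
  have cu: "c + k/2 = k*(q*r-1)/4" "c + k = k*(q*r+1)/4" unfolding c_def by (simp_all add: field_simps)
  have "measure lborel (disc_cell k (k/2) (k * q / 2) R) =
      4 * ((circle_primitive R (c + k/2) - circle_primitive R (k/2) - c * (k * q / 2))
           + (circle_primitive R R - circle_primitive R (c + k)))"
    unfolding R_def c_def q_def r_def by (rule measure_triangular_disc_cell_primitives[OF k \<rho>])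
  also have "\<dots> = 4 * (k*(q*r-1)/4 * (k*(r+q)/4)/2 - (k/2) * (k*r/2)/2 - c*(k*q/2)
      - k*(q*r+1)/4 * (k*(r-q)/4)/2) + 6 * R\<^sup>2 * (arctan r - pi/3)"
    unfolding cu prim circle_primitive_radius[OF R0] by (simp add: field_simps)
  also have "4 * (k*(q*r-1)/4 * (k*(r+q)/4)/2 - (k/2) * (k*r/2)/2 - c*(k*q/2)
      - k*(q*r+1)/4 * (k*(r-q)/4)/2) = k\<^sup>2*(3*q - 3*r)/2"
  proof -
    have "2*(k*(q*r-1))*(k*(r+q)) - 8*k*(k*r) - 8*(k*(q*r-3))*(k*q) - 2*(k*(q*r+1))*(k*(r-q))
        = 24*k\<^sup>2*q - 24*k\<^sup>2*r"
      by (rule eq_by_radical_relations[where A="- 4*r*k\<^sup>2" and B="0" and q=q and r=r and \<rho>=\<rho>],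
          algebra, rule q2, rule r2)
    then show ?thesis unfolding c_def by (simp add: field_simps)
  qed
  finally show ?thesis
    using triangular_arctan_identities(1)[OF triangular_radical_bounds(1)[OF \<rho>, folded r_def]]
    unfolding R_def q_def by simp
qed
lemma measure_triangular_disc_cell:
  fixes k \<rho> :: real
  assumes k: "k > 0" and \<rho>: "\<rho> > 1"
  shows "measure lborel (disc_cell k (k/2) (k * sqrt 3 / 2) (\<rho> * k))
           = (k * (\<rho>\<^sup>2 - 1))\<^sup>2 * sqrt 3 / 2 * triangular_fraction \<rho>"
proof -
  define q where "q = sqrt 3"
  define r where "r = sqrt (4*\<rho>\<^sup>2 - 1)"
  define X where "X = arctan ((r - q) / (q * r + 1))"
  have q3: "q * (q * z) = 3 * z" for z unfolding q_def by (simp add: mult.assoc[symmetric])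
  have "(\<rho>\<^sup>2 - 1)\<^sup>2 \<noteq> 0" using \<rho> by (metis less_irrefl one_less_power zero_less_numeral eq_iff_diff_eq_0
      power_eq_0_iff)
  then have "(k * (\<rho>\<^sup>2 - 1))\<^sup>2 * q / 2 * triangular_fraction \<rho> = k\<^sup>2 * q / 2 * (4 * q * \<rho>\<^sup>2 * X - q * r + 3)"
    unfolding triangular_fraction_def q_def[symmetric] r_def[symmetric] X_def[symmetric]
    by (simp add: power_mult_distrib)
  also have "\<dots> = 6 * (\<rho> * k)\<^sup>2 * X + k\<^sup>2 * (3 * q - 3 * r) / 2"
    by (simp add: power_mult_distrib field_simps q3)
  finally show ?thesis unfolding measure_triangular_disc_cell_arctan[OF k \<rho>] q_def r_def X_def by simp
qed

lemma measure_triangular_disc_cell_less: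
  fixes k \<rho> :: real
  assumes k: "k > 0" and \<rho>: "\<rho> > 1"
  shows "measure lborel (disc_cell k (k/2) (k * sqrt 3 / 2) (\<rho> * k)) < 2 * sqrt 3 * (\<rho> * k - k)\<^sup>2"
proof -
  define q where "q = sqrt 3"
  define r where "r = sqrt (4*\<rho>\<^sup>2 - 1)"
  define x where "x = (r - q) / (q * r + 1)"
  note bounds = triangular_radical_bounds[OF \<rho>, folded q_def r_def]
  have r1: "\<rho>\<^sup>2 > 1" using \<rho> by (metis one_less_power zero_less_numeral pos2)
  have q2: "q\<^sup>2 = 3" and q0: "q > 0" unfolding q_def by auto
  have r2: "r\<^sup>2 = 4*\<rho>\<^sup>2 - 1" and r0: "r > 0" unfolding r_def using r1 by auto
  have d: "q * r + 1 > 0" using q0 r0 by (simp add: add_pos_pos)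
  have "arctan x \<le> x" unfolding x_def by (rule arctan_le_self) (use bounds q0 r0 in simp)
  then have "6 * (\<rho> * k)\<^sup>2 * arctan x \<le> 6 * (\<rho> * k)\<^sup>2 * x" by (rule mult_left_mono) simp
  moreover have "6 * (\<rho> * k)\<^sup>2 * x + k\<^sup>2 * (3 * q - 3 * r) / 2 < 2 * q * (\<rho> * k - k)\<^sup>2"
  proof -
    have id: "4*q*(\<rho>-1)\<^sup>2*(q*r+1) - 12*\<rho>\<^sup>2*(r-q) + (3*r-3*q)*(q*r+1) = q*(4*\<rho>-(q*r+1))\<^sup>2"
      by (rule eq_by_radical_relations[where A="- r + 4*r*\<rho>\<^sup>2 - q*r\<^sup>2" and B="0" and q=q and r=r
            and \<rho>=\<rho>], algebra, rule q2, rule r2)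
    have "4*\<rho> - (q*r+1) \<noteq> 0" using bounds(3) by linarith
    then have pos: "q*(4*\<rho>-(q*r+1))\<^sup>2 > 0" using q0 by simp
    have "(2 * q * (\<rho> * k - k)\<^sup>2 - (6 * (\<rho> * k)\<^sup>2 * x + k\<^sup>2 * (3*q - 3*r) / 2)) * (2*(q*r+1)) =
        k\<^sup>2 * (4*q*(\<rho>-1)\<^sup>2*(q*r+1) - 12*\<rho>\<^sup>2*(r-q) + (3*r-3*q)*(q*r+1))"
      unfolding x_def using d by (simp add: field_simps power2_eq_square)
    also have "\<dots> > 0" unfolding id using pos k by simp
    finally show ?thesis using d by (simp add: zero_less_mult_iff)
  qed
  moreover have "measure lborel (disc_cell k (k/2) (k * q / 2) (\<rho> * k))
      = 6 * (\<rho> * k)\<^sup>2 * arctan x + k\<^sup>2 * (3 * q - 3 * r) / 2"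
    unfolding q_def r_def x_def by (rule measure_triangular_disc_cell_arctan[OF k \<rho>])
  ultimately show ?thesis unfolding q_def[symmetric] by linarith
qed

section \<open>The square lattice\<close>

lemma square_lattice_eq_skew_lattice: "square_lattice a = skew_lattice a a 0"
  unfolding square_lattice_def skew_lattice_def by simp

definition square_neighbours :: "real \<Rightarrow> (real \<times> real) set" where
  "square_neighbours a = {(a, 0), (-a, 0), (0, a), (0, -a)}"

lemma square_neighbours_subset: "a > 0 \<Longrightarrow> square_neighbours a \<subseteq> skew_lattice a a 0 - {0}"
  using skew_latticeI[of a 1 0 0 a] skew_latticeI[of a "-1" 0 0 a]
    skew_latticeI[of a 0 1 0 a] skew_latticeI[of a 0 "-1" 0 a]
  by (auto simp: square_neighbours_def zero_prod_def)

lemma origin_cell_square_neighbours: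
  assumes a: "a > 0" and \<rho>: "\<rho> > 1"
  defines "k \<equiv> a / (\<rho>\<^sup>2 - 1)"
  shows "origin_cell \<rho> (square_neighbours a) = disc_cell k 0 k (\<rho> * k)"
proof (rule set_eqI)
  fix z :: "real \<times> real"
  obtain p q where z: "z = (p, q)" by (cases z)
  have k: "k \<ge> 0" unfolding k_def using a one_less_power[OF \<rho>, of 2] by simp
  have "\<rho> * norm z < norm ((a, 0) - z) \<longleftrightarrow> (p + k)\<^sup>2 + q\<^sup>2 < (\<rho> * k)\<^sup>2"
    "\<rho> * norm z < norm ((-a, 0) - z) \<longleftrightarrow> (p - k)\<^sup>2 + q\<^sup>2 < (\<rho> * k)\<^sup>2"
    "\<rho> * norm z < norm ((0, a) - z) \<longleftrightarrow> p\<^sup>2 + (q + k)\<^sup>2 < (\<rho> * k)\<^sup>2"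
    "\<rho> * norm z < norm ((0, -a) - z) \<longleftrightarrow> p\<^sup>2 + (q - k)\<^sup>2 < (\<rho> * k)\<^sup>2"
    using apollonius_pair[OF a \<rho>, of 1 0 z] apollonius_pair[OF a \<rho>, of "-1" 0 z]
      apollonius_pair[OF a \<rho>, of 0 1 z] apollonius_pair[OF a \<rho>, of 0 "-1" z]
    unfolding k_def[symmetric] z by simp_all
  moreover have "(\<bar>p\<bar> + k)\<^sup>2 + q\<^sup>2 < (\<rho> * k)\<^sup>2 \<longleftrightarrow> (p + k)\<^sup>2 + q\<^sup>2 < (\<rho> * k)\<^sup>2 \<and> (p - k)\<^sup>2 + q\<^sup>2 < (\<rho> * k)\<^sup>2"
    using abs_add_power2_less_iff[OF k, of p "(\<rho> * k)\<^sup>2 - q\<^sup>2"] by linarith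
  moreover have "p\<^sup>2 + (\<bar>q\<bar> + k)\<^sup>2 < (\<rho> * k)\<^sup>2 \<longleftrightarrow> p\<^sup>2 + (q + k)\<^sup>2 < (\<rho> * k)\<^sup>2 \<and> p\<^sup>2 + (q - k)\<^sup>2 < (\<rho> * k)\<^sup>2"
    using abs_add_power2_less_iff[OF k, of q "(\<rho> * k)\<^sup>2 - p\<^sup>2"] by linarith
  ultimately show "z \<in> origin_cell \<rho> (square_neighbours a) \<longleftrightarrow> z \<in> disc_cell k 0 k (\<rho> * k)"
    unfolding origin_cell_def disc_cell_def square_neighbours_def z by auto
qed

lemma origin_cell_square_neighbours_bounds:
  assumes a: "a > 0" and \<rho>: "\<rho> \<ge> 1" and z: "z \<in> origin_cell \<rho> (square_neighbours a)"
  shows "\<bar>fst z\<bar> < a/2" "\<bar>snd z\<bar> < a/2"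
proof -
  obtain p q where pq: "z = (p, q)" by (cases z)
  have closer: "p\<^sup>2 + q\<^sup>2 < (fst n - p)\<^sup>2 + (snd n - q)\<^sup>2" if "n \<in> square_neighbours a" for n
  proof -
    have "norm z \<le> \<rho> * norm z" using \<rho> by (simp add: mult_le_cancel_right1)
    also have "\<dots> < norm (n - z)" using z that unfolding origin_cell_def by blast
    finally show ?thesis unfolding pq by (cases n) (simp add: norm_Pair)
  qed
  have "0 < a * (a - 2*p)" "0 < a * (a + 2*p)" "0 < a * (a - 2*q)" "0 < a * (a + 2*q)"
    using closer[of "(a, 0)"] closer[of "(-a, 0)"] closer[of "(0, a)"] closer[of "(0, -a)"]
    by (auto simp: square_neighbours_def power2_eq_square algebra_simps)
  then show "\<bar>fst z\<bar> < a/2" "\<bar>snd z\<bar> < a/2" using a unfolding pq by (auto simp: zero_less_mult_iff)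
qed

lemma power2_diff_int_multiple_ge:
  fixes a p :: real and i :: int
  assumes a: "a > 0" and p: "\<bar>p\<bar> < a/2" and i: "i \<ge> 1"
  shows "(a - p)\<^sup>2 \<le> (a * of_int i - p)\<^sup>2"
proof -
  have "a \<le> a * of_int i" using a i by simp
  then show ?thesis using p by (intro power_mono) auto
qed

lemma power2_diff_int_multiple_ge_neg:
  fixes a p :: real and i :: int
  assumes a: "a > 0" and p: "\<bar>p\<bar> < a/2" and i: "i \<le> -1"
  shows "(-a - p)\<^sup>2 \<le> (a * of_int i - p)\<^sup>2"
  using power2_diff_int_multiple_ge[OF a, of "-p" "-i"] p i by (simp add: power2_commute add.commute)

lemma power2_le_power2_diff_int_multiple:
  fixes a p :: real and j :: int
  assumes a: "a > 0" and p: "\<bar>p\<bar> < a/2"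
  shows "p\<^sup>2 \<le> (a * of_int j - p)\<^sup>2"
proof -
  consider "j = 0" | "j \<ge> 1" | "j \<le> -1" by linarith
  then show ?thesis
  proof cases
    case 2
    have "p\<^sup>2 \<le> (a - p)\<^sup>2" using p by (simp add: abs_le_square_iff[symmetric])
    then show ?thesis using power2_diff_int_multiple_ge[OF a p 2] by linarith
  next
    case 3
    have "p\<^sup>2 \<le> (-a - p)\<^sup>2" using p by (simp add: abs_le_square_iff[symmetric])
    then show ?thesis using power2_diff_int_multiple_ge_neg[OF a p 3] by linarith
  qed simp
qed

lemma square_neighbours_nearest:
  assumes a: "a > 0" and \<rho>: "\<rho> \<ge> 1" and z: "z \<in> origin_cell \<rho> (square_neighbours a)"
    and w: "w \<in> skew_lattice a a 0 - {0}"
  shows "\<exists>n\<in>square_neighbours a. norm (n - z) \<le> norm (w - z)"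
proof -
  obtain p q where pq: "z = (p, q)" by (cases z)
  have p: "\<bar>p\<bar> < a/2" and q: "\<bar>q\<bar> < a/2" using origin_cell_square_neighbours_bounds[OF a \<rho> z] pq by auto
  obtain i j where "w = (a * (of_int i + of_int j * 0), a * of_int j)"
    using w by (blast elim: skew_latticeE)
  then have wij: "w = (a * of_int i, a * of_int j)" by simp
  have "i \<noteq> 0 \<or> j \<noteq> 0" using w wij by (auto simp: zero_prod_def)
  then consider "i \<ge> 1" | "i \<le> -1" | "i = 0" "j \<ge> 1" | "i = 0" "j \<le> -1" by linarith
  then obtain n where n: "n \<in> square_neighbours a"
    "(fst n - p)\<^sup>2 + (snd n - q)\<^sup>2 \<le> (a * of_int i - p)\<^sup>2 + (a * of_int j - q)\<^sup>2"
  proof cases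
    case 1
    then show thesis using that[of "(a, 0)"] power2_diff_int_multiple_ge[OF a p]
        power2_le_power2_diff_int_multiple[OF a q, of j]
      by (force simp: square_neighbours_def)
  next
    case 2
    then show thesis using that[of "(-a, 0)"] power2_diff_int_multiple_ge_neg[OF a p]
        power2_le_power2_diff_int_multiple[OF a q, of j]
      by (force simp: square_neighbours_def)
  next
    case 3
    then show thesis using that[of "(0, a)"] power2_diff_int_multiple_ge[OF a q]
      by (force simp: square_neighbours_def)
  next
    case 4
    then show thesis using that[of "(0, -a)"] power2_diff_int_multiple_ge_neg[OF a q]
      by (force simp: square_neighbours_def)
  qed
  then have "norm (n - z) \<le> norm (w - z)" unfolding pq wij by (cases n) (simp add: norm_Pair)
  then show ?thesis using n(1) by blast
qed

lemma tendsto_Q_union_square_lattice: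
  assumes a: "a > 0" and \<rho>: "\<rho> > 1"
  shows "((\<lambda>r. measure lborel (Q_union (square_lattice a) \<rho> \<inter> ball 0 r) / (pi * r\<^sup>2))
           \<longlongrightarrow> square_fraction \<rho>) at_top"
proof -
  have "((\<lambda>r. measure lborel (Q_union (square_lattice a) \<rho> \<inter> ball 0 r) / (pi * r\<^sup>2))
      \<longlongrightarrow> measure lborel (origin_cell \<rho> (square_neighbours a)) / (a * a)) at_top"
    unfolding square_lattice_eq_skew_lattice
  proof (rule tendsto_Q_union_skew_lattice[OF a a \<rho> _ _ square_neighbours_subset[OF a]])
    show "finite (square_neighbours a)" "square_neighbours a \<noteq> {}" by (simp_all add: square_neighbours_def)
  qed (use square_neighbours_nearest[OF a less_imp_le[OF \<rho>]] in blast)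
  moreover have "measure lborel (origin_cell \<rho> (square_neighbours a)) = (a * a) * square_fraction \<rho>"
  proof -
    have r1: "\<rho>\<^sup>2 - 1 > 0" using one_less_power[OF \<rho>, of 2] by simp
    then have "measure lborel (origin_cell \<rho> (square_neighbours a))
        = (a / (\<rho>\<^sup>2 - 1) * (\<rho>\<^sup>2 - 1))\<^sup>2 * square_fraction \<rho>"
      unfolding origin_cell_square_neighbours[OF a \<rho>] using a
      by (intro measure_square_disc_cell[OF _ \<rho>]) simp
    then show ?thesis using r1 by (simp add: power2_eq_square)
  qed
  ultimately show ?thesis using a by simp
qed

lemma square_fraction_less:
  assumes \<rho>: "\<rho> > 1"
  shows "square_fraction \<rho> < 4 / (1 + \<rho>)\<^sup>2"
proof -
  have "(\<rho>\<^sup>2 - 1)\<^sup>2 * square_fraction \<rho> < 4 * (\<rho> - 1)\<^sup>2"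
    using measure_square_disc_cell_less[of 1 \<rho>] measure_square_disc_cell[of 1 \<rho>] \<rho> by simp
  moreover have "(\<rho>\<^sup>2 - 1)\<^sup>2 = (\<rho> - 1)\<^sup>2 * (1 + \<rho>)\<^sup>2" by (simp add: power2_eq_square algebra_simps)
  ultimately show ?thesis using \<rho> by (simp add: field_simps)
qed

section \<open>The triangular lattice\<close>

lemma triangular_lattice_eq_skew_lattice:
  "triangular_lattice a = skew_lattice a (a * sqrt 3 / 2) (1/2)"
proof -
  have "(a * (of_int i + of_int j / 2), a * of_int j * sqrt 3 / 2) =
      (a * (of_int i + of_int j * (1/2)), a * sqrt 3 / 2 * of_int j)" for i j :: int
    by simp
  then show ?thesis unfolding triangular_lattice_def skew_lattice_def by presburger
qed

definition hex_neighbours :: "real \<Rightarrow> (real \<times> real) set" where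
  "hex_neighbours a = {(a, 0), (-a, 0), (a/2, a * sqrt 3 / 2), (-a/2, -(a * sqrt 3 / 2)),
                       (-a/2, a * sqrt 3 / 2), (a/2, -(a * sqrt 3 / 2))}"

lemma hex_neighbours_subset:
  assumes "a > 0"
  shows "hex_neighbours a \<subseteq> skew_lattice a (a * sqrt 3 / 2) (1/2) - {0}"
  using assms skew_latticeI[of a 1 0 "1/2" "a * sqrt 3 / 2"] skew_latticeI[of a "-1" 0 "1/2" "a * sqrt 3 / 2"]
    skew_latticeI[of a 0 1 "1/2" "a * sqrt 3 / 2"] skew_latticeI[of a 0 "-1" "1/2" "a * sqrt 3 / 2"]
    skew_latticeI[of a "-1" 1 "1/2" "a * sqrt 3 / 2"] skew_latticeI[of a 1 "-1" "1/2" "a * sqrt 3 / 2"]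
  by (auto simp: hex_neighbours_def zero_prod_def)

lemma origin_cell_hex_neighbours:
  assumes a: "a > 0" and \<rho>: "\<rho> > 1"
  defines "k \<equiv> a / (\<rho>\<^sup>2 - 1)"
  shows "origin_cell \<rho> (hex_neighbours a) = disc_cell k (k/2) (k * sqrt 3 / 2) (\<rho> * k)"
proof (rule set_eqI)
  fix z :: "real \<times> real"
  obtain p q where z: "z = (p, q)" by (cases z)
  define S where "S = (\<rho> * k)\<^sup>2"
  define h where "h = k * sqrt 3 / 2"
  have k: "k \<ge> 0" unfolding k_def using a one_less_power[OF \<rho>, of 2] by simp
  have unit: "(1/2)\<^sup>2 + (sqrt 3 / 2)\<^sup>2 = (1::real)" by (simp add: power_divide)
  have "\<rho> * norm z < norm ((a, 0) - z) \<longleftrightarrow> (p + k)\<^sup>2 + q\<^sup>2 < S"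
    "\<rho> * norm z < norm ((-a, 0) - z) \<longleftrightarrow> (p - k)\<^sup>2 + q\<^sup>2 < S"
    "\<rho> * norm z < norm ((a/2, a * sqrt 3 / 2) - z) \<longleftrightarrow> (p + k/2)\<^sup>2 + (q + h)\<^sup>2 < S"
    "\<rho> * norm z < norm ((-a/2, -(a * sqrt 3 / 2)) - z) \<longleftrightarrow> (p - k/2)\<^sup>2 + (q - h)\<^sup>2 < S"
    "\<rho> * norm z < norm ((-a/2, a * sqrt 3 / 2) - z) \<longleftrightarrow> (p - k/2)\<^sup>2 + (q + h)\<^sup>2 < S"
    "\<rho> * norm z < norm ((a/2, -(a * sqrt 3 / 2)) - z) \<longleftrightarrow> (p + k/2)\<^sup>2 + (q - h)\<^sup>2 < S"
    using apollonius_pair[OF a \<rho>, of 1 0 z] apollonius_pair[OF a \<rho>, of "-1" 0 z]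
      apollonius_pair[OF a \<rho>, of "1/2" "sqrt 3 / 2" z] apollonius_pair[OF a \<rho>, of "-1/2" "-(sqrt 3 / 2)" z]
      apollonius_pair[OF a \<rho>, of "-1/2" "sqrt 3 / 2" z] apollonius_pair[OF a \<rho>, of "1/2" "-(sqrt 3 / 2)" z]
      unit
    unfolding k_def[symmetric] z S_def h_def by simp_all
  moreover have "h \<ge> 0" "k/2 \<ge> 0" unfolding h_def using k by simp_all
  then have "(\<bar>p\<bar> + k)\<^sup>2 + q\<^sup>2 < S \<longleftrightarrow> (p + k)\<^sup>2 + q\<^sup>2 < S \<and> (p - k)\<^sup>2 + q\<^sup>2 < S"
    "(\<bar>p\<bar> + k/2)\<^sup>2 + (\<bar>q\<bar> + h)\<^sup>2 < S \<longleftrightarrow>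
       (p + k/2)\<^sup>2 + (\<bar>q\<bar> + h)\<^sup>2 < S \<and> (p - k/2)\<^sup>2 + (\<bar>q\<bar> + h)\<^sup>2 < S"
    "x\<^sup>2 + (\<bar>q\<bar> + h)\<^sup>2 < S \<longleftrightarrow> x\<^sup>2 + (q + h)\<^sup>2 < S \<and> x\<^sup>2 + (q - h)\<^sup>2 < S" for x
    using abs_add_power2_less_iff[OF k, of p "S - q\<^sup>2"]
      abs_add_power2_less_iff[of "k/2" p "S - (\<bar>q\<bar> + h)\<^sup>2"]
      abs_add_power2_less_iff[of h q "S - x\<^sup>2"] by linarith+
  ultimately show "z \<in> origin_cell \<rho> (hex_neighbours a) \<longleftrightarrow>
      z \<in> disc_cell k (k/2) (k * sqrt 3 / 2) (\<rho> * k)"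
    unfolding origin_cell_def disc_cell_def hex_neighbours_def h_def[symmetric] S_def[symmetric] z
    by auto
qed

lemma eisenstein_norm_ge_3:
  fixes i j :: int
  assumes "(i, j) \<notin> {(0,0), (1,0), (-1,0), (0,1), (0,-1), (-1,1), (1,-1)}"
  shows "3 \<le> i*i + i*j + j*j"
proof -
  have four: "4 * (i*i + i*j + j*j) = (2*i + j) * (2*i + j) + 3 * (j * j)" by (simp add: algebra_simps)
  have bound: "3 \<le> N" if "4 * N = M + 3 * J" "12 \<le> M + 3 * J" for N M J :: int
    using that by linarith
  have sq: "c * c \<le> x * x" if "c \<le> \<bar>x\<bar>" "0 \<le> c" for c x :: int
    using mult_mono[OF that(1) that(1)] that(2) by (simp add: abs_mult_self_eq)
  consider "2 \<le> \<bar>j\<bar>" | "1 \<le> \<bar>j\<bar>" "3 \<le> \<bar>2*i + j\<bar>" | "j = 0" "3 \<le> \<bar>2*i + j\<bar>"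
    | "\<bar>j\<bar> \<le> 1" "\<bar>2*i + j\<bar> \<le> 2" by linarith
  then show ?thesis
  proof cases
    case 1
    have "4 \<le> j * j" using sq[of 2 j] 1 by simp
    moreover have "0 \<le> (2*i + j) * (2*i + j)" by simp
    ultimately show ?thesis using bound[OF four] by linarith
  next
    case 2
    have "1 \<le> j * j" "9 \<le> (2*i + j) * (2*i + j)" using sq[of 1 j] sq[of 3 "2*i + j"] 2 by simp_all
    then show ?thesis using bound[OF four] by linarith
  next
    case 3
    then have "2 \<le> \<bar>i\<bar>" by linarith
    then show ?thesis using 3 sq[of 2 i] by simp

  next
    case 4
    then have "i \<in> {-1, 0, 1}" "j \<in> {-1, 0, 1}" by auto
    then show ?thesis using assms by auto
  qed
qed

lemma hexagon_quadratic_le: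
  fixes V W a :: real
  assumes "\<bar>V\<bar> < a/2" "\<bar>W\<bar> < a/2" "\<bar>V - W\<bar> < a/2"
  shows "V*V + W*W - V*W \<le> a*a/4"
proof -
  have sq: "x*x \<le> a*a/4" if "\<bar>x\<bar> < a/2" for x
  proof -
    have "\<bar>x\<bar>*\<bar>x\<bar> \<le> (a/2)*(a/2)" using that by (intro mult_mono) auto
    then show ?thesis by (simp add: abs_mult_self_eq)
  qed
  consider "V*W < 0" | "0 \<le> V*W" "\<bar>W\<bar> \<le> \<bar>V\<bar>" | "0 \<le> V*W" "\<bar>V\<bar> \<le> \<bar>W\<bar>" by linarith
  then show ?thesis
  proof cases
    case 1
    then show ?thesis using sq[OF assms(3)] by (simp add: algebra_simps)
  next
    case 2
    have "\<bar>W\<bar>*\<bar>W\<bar> \<le> \<bar>V\<bar>*\<bar>W\<bar>" using 2 by (intro mult_right_mono) auto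
    then have "W*W \<le> V*W" using 2 by (simp add: abs_mult_self_eq abs_mult[symmetric])
    then show ?thesis using sq[OF assms(1)] by linarith
  next
    case 3
    have "\<bar>V\<bar>*\<bar>V\<bar> \<le> \<bar>V\<bar>*\<bar>W\<bar>" using 3 by (intro mult_left_mono) auto
    then have "V*V \<le> V*W" using 3 by (simp add: abs_mult_self_eq abs_mult[symmetric])
    then show ?thesis using sq[OF assms(2)] by linarith
  qed
qed

lemma origin_cell_hex_neighbours_bounds:
  assumes a: "a > 0" and \<rho>: "\<rho> \<ge> 1" and z: "(p, q) \<in> origin_cell \<rho> (hex_neighbours a)"
  shows "\<bar>p\<bar> < a/2" "\<bar>p + sqrt 3 * q\<bar> < a" "\<bar>sqrt 3 * q - p\<bar> < a"
proof -
  have closer: "2 * (n1 * p + n2 * q) < n1\<^sup>2 + n2\<^sup>2" if n: "(n1, n2) \<in> hex_neighbours a" for n1 n2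
  proof -
    have "norm (p, q) \<le> \<rho> * norm (p, q)" using \<rho> by (simp add: mult_le_cancel_right1)
    also have "\<dots> < norm ((n1, n2) - (p, q))" using z n unfolding origin_cell_def by blast
    finally have "p\<^sup>2 + q\<^sup>2 < (n1 - p)\<^sup>2 + (n2 - q)\<^sup>2" by (simp add: norm_Pair)
    then show ?thesis by (simp add: power2_eq_square algebra_simps)
  qed
  have s3: "(a * sqrt 3 / 2)\<^sup>2 = 3 * a\<^sup>2 / 4" by (simp add: power_mult_distrib power_divide)
  have "a * (2 * p) < a * a" "a * (-2 * p) < a * a"
    "a * (p + sqrt 3 * q) < a * a" "a * (-(p + sqrt 3 * q)) < a * a"
    "a * (sqrt 3 * q - p) < a * a" "a * (-(sqrt 3 * q - p)) < a * a"
    using closer[of a 0] closer[of "-a" 0] closer[of "a/2" "a * sqrt 3 / 2"]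
      closer[of "-a/2" "-(a * sqrt 3 / 2)"] closer[of "-a/2" "a * sqrt 3 / 2"]
      closer[of "a/2" "-(a * sqrt 3 / 2)"] s3
    by (simp_all add: hex_neighbours_def power_divide power2_eq_square algebra_simps)
  note bounds = this[unfolded mult_less_cancel_left_pos[OF a]]
  then show "\<bar>p\<bar> < a/2" "\<bar>p + sqrt 3 * q\<bar> < a" "\<bar>sqrt 3 * q - p\<bar> < a"
    unfolding abs_less_iff by linarith+
qed

text \<open>In the coordinates \<open>V = (p + sqrt 3 q) / 2\<close>, \<open>W = (sqrt 3 q - p) / 2\<close> (so \<open>p = V - W\<close>) the three
  bounds say that \<open>(p, q)\<close> lies in the regular hexagon with inradius \<open>a/2\<close>, and
  \<open>3 (p\<^sup>2 + q\<^sup>2) = 2 (p\<^sup>2 + V\<^sup>2 + W\<^sup>2) = 4 (V\<^sup>2 + W\<^sup>2 - V W)\<close>.\<close>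

lemma hexagon_norm_le:
  assumes p: "\<bar>p\<bar> < a/2" and pV: "\<bar>p + sqrt 3 * q\<bar> < a" and pW: "\<bar>sqrt 3 * q - p\<bar> < a"
  shows "3 * (p\<^sup>2 + q\<^sup>2) \<le> a\<^sup>2"
proof -
  define V W where "V = (p + sqrt 3 * q) / 2" and "W = (sqrt 3 * q - p) / 2"
  have V: "\<bar>V\<bar> < a/2" and W: "\<bar>W\<bar> < a/2" using pV pW unfolding V_def W_def by simp_all
  have pVW: "p = V - W" unfolding V_def W_def by (simp add: field_simps)
  have "3 * q\<^sup>2 = (V + W) * (V + W)" unfolding V_def W_def by (simp add: power2_eq_square field_simps)
  then have "3 * (p\<^sup>2 + q\<^sup>2) = 4 * (V*V + W*W - V*W)"
    unfolding pVW by (simp add: power2_eq_square algebra_simps)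
  then show ?thesis using hexagon_quadratic_le[OF V W] p pVW by (simp add: power2_eq_square)
qed

lemma hexagon_norm_le_sum:
  assumes p: "\<bar>p\<bar> < a/2" and pV: "\<bar>p + sqrt 3 * q\<bar> < a" and pW: "\<bar>sqrt 3 * q - p\<bar> < a"
  shows "3 * (p\<^sup>2 + q\<^sup>2) \<le> a * \<bar>p\<bar> + a * \<bar>(p + sqrt 3 * q) / 2\<bar> + a * \<bar>(sqrt 3 * q - p) / 2\<bar>"
proof -
  define V W where "V = (p + sqrt 3 * q) / 2" and "W = (sqrt 3 * q - p) / 2"
  have V: "\<bar>V\<bar> < a/2" and W: "\<bar>W\<bar> < a/2" using pV pW unfolding V_def W_def by simp_all
  have pVW: "p = V - W" unfolding V_def W_def by (simp add: field_simps)
  have "3 * q\<^sup>2 = (V + W) * (V + W)" unfolding V_def W_def by (simp add: power2_eq_square field_simps)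
  then have "3 * (p\<^sup>2 + q\<^sup>2) = 2 * (p * p) + 2 * (V * V) + 2 * (W * W)"
    unfolding pVW by (simp add: power2_eq_square algebra_simps)
  also have "\<dots> \<le> a * \<bar>p\<bar> + a * \<bar>V\<bar> + a * \<bar>W\<bar>"
  proof -
    have "2 * (x * x) \<le> a * \<bar>x\<bar>" if "\<bar>x\<bar> < a/2" for x
    proof -
      have "(2 * \<bar>x\<bar>) * \<bar>x\<bar> \<le> a * \<bar>x\<bar>" using that by (intro mult_right_mono) auto
      then show ?thesis by (simp add: abs_mult_self_eq mult.assoc)
    qed
    then show ?thesis using p V W by (intro add_mono)
  qed
  finally show ?thesis unfolding V_def W_def .
qed

lemma hexagon_neighbour_inner_ge:
  assumes a: "a > 0" and p: "\<bar>p\<bar> < a/2" and pV: "\<bar>p + sqrt 3 * q\<bar> < a" and pW: "\<bar>sqrt 3 * q - p\<bar> < a"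
  shows "\<exists>n\<in>hex_neighbours a. p\<^sup>2 + q\<^sup>2 \<le> 2 * (fst n * p + snd n * q)"
proof -
  define V W where "V = (p + sqrt 3 * q) / 2" and "W = (sqrt 3 * q - p) / 2"
  note sum = hexagon_norm_le_sum[OF p pV pW, folded V_def W_def]
  moreover have "0 \<le> a * \<bar>p\<bar>" "0 \<le> a * \<bar>V\<bar>" "0 \<le> a * \<bar>W\<bar>" using a by simp_all
  moreover have "\<not> (2 * A < S \<and> 2 * B < S \<and> 2 * C < S)"
    if "3 * S \<le> A + B + C" "0 \<le> A" "0 \<le> B" "0 \<le> C" for A B C S :: real
    using that by linarith
  ultimately have "\<not> (2 * (a * \<bar>p\<bar>) < p\<^sup>2 + q\<^sup>2 \<and> 2 * (a * \<bar>V\<bar>) < p\<^sup>2 + q\<^sup>2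
      \<and> 2 * (a * \<bar>W\<bar>) < p\<^sup>2 + q\<^sup>2)"
    by blast
  then consider "p\<^sup>2 + q\<^sup>2 \<le> 2 * (a * \<bar>p\<bar>)" | "p\<^sup>2 + q\<^sup>2 \<le> 2 * (a * \<bar>V\<bar>)"
    | "p\<^sup>2 + q\<^sup>2 \<le> 2 * (a * \<bar>W\<bar>)" by (auto simp: not_less)
  then show ?thesis
  proof cases
    case 1
    then show ?thesis
      by (cases "p \<ge> 0") (force simp: hex_neighbours_def)+
  next
    case 2
    moreover have "2 * (a * V) = 2 * ((a/2) * p + (a * sqrt 3 / 2) * q)"
      unfolding V_def by (simp add: algebra_simps)
    ultimately show ?thesis
      by (cases "V \<ge> 0") (force simp: hex_neighbours_def algebra_simps)+
  next
    case 3
    moreover have "2 * (a * W) = 2 * ((-a/2) * p + (a * sqrt 3 / 2) * q)"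
      unfolding W_def by (simp add: field_simps)
    ultimately show ?thesis
      by (cases "W \<ge> 0") (force simp: hex_neighbours_def algebra_simps)+
  qed
qed

lemma hex_neighbours_norm: "n \<in> hex_neighbours a \<Longrightarrow> (fst n)\<^sup>2 + (snd n)\<^sup>2 = a\<^sup>2"
proof -
  have "(a/2)\<^sup>2 + (a * sqrt 3 / 2)\<^sup>2 = a\<^sup>2" by (simp add: power_mult_distrib power_divide)
  then show "n \<in> hex_neighbours a \<Longrightarrow> (fst n)\<^sup>2 + (snd n)\<^sup>2 = a\<^sup>2" unfolding hex_neighbours_def by auto
qed

lemma hexagon_close_neighbour:
  assumes a: "a > 0" and p: "\<bar>p\<bar> < a/2" and pV: "\<bar>p + sqrt 3 * q\<bar> < a" and pW: "\<bar>sqrt 3 * q - p\<bar> < a"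
  shows "\<exists>n\<in>hex_neighbours a. norm (n - (p, q)) \<le> a"
proof -
  obtain n where n: "n \<in> hex_neighbours a" "p\<^sup>2 + q\<^sup>2 \<le> 2 * (fst n * p + snd n * q)"
    using hexagon_neighbour_inner_ge[OF a p pV pW] by blast
  have "(norm (n - (p, q)))\<^sup>2 = (fst n)\<^sup>2 + (snd n)\<^sup>2 - 2 * (fst n * p + snd n * q) + (p\<^sup>2 + q\<^sup>2)"
    by (cases n) (simp add: power2_norm_eq_inner, simp add: power2_eq_square algebra_simps)
  then have "(norm (n - (p, q)))\<^sup>2 \<le> a\<^sup>2" using n(2) hex_neighbours_norm[OF n(1)] by linarith
  then have "norm (n - (p, q)) \<le> a" using a by (simp add: abs_le_square_iff[symmetric])
  then show ?thesis using n(1) by blast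
qed
lemma triangular_lattice_norm_ge:
  assumes a: "a > 0" and w: "w \<in> skew_lattice a (a * sqrt 3 / 2) (1/2)" "w \<notin> hex_neighbours a" "w \<noteq> 0"
  shows "sqrt 3 * a \<le> norm w"
proof -
  obtain i j where wij: "w = (a * (of_int i + of_int j * (1/2)), a * sqrt 3 / 2 * of_int j)"
    using w(1) by (rule skew_latticeE)
  have "(i, j) \<notin> {(0,0), (1,0), (-1,0), (0,1), (0,-1), (-1,1), (1,-1)}"
    using w(2,3) unfolding wij hex_neighbours_def by (auto simp: zero_prod_def)
  then have "(3::real) \<le> of_int (i*i + i*j + j*j)" using eisenstein_norm_ge_3 by (metis of_int_le_iff of_int_numeral)
  then have "a\<^sup>2 * 3 \<le> a\<^sup>2 * of_int (i*i + i*j + j*j)" by (rule mult_left_mono) simp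
  then have "(sqrt 3 * a)\<^sup>2 \<le> a\<^sup>2 * of_int (i*i + i*j + j*j)" by (simp add: power_mult_distrib mult.commute)
  also have "\<dots> = (norm w)\<^sup>2"
    unfolding wij by (simp add: power2_norm_eq_inner, simp add: power2_eq_square algebra_simps)
  finally show ?thesis by (rule power2_le_imp_le) simp
qed

lemma hex_neighbours_nearest:
  assumes a: "a > 0" and \<rho>: "\<rho> \<ge> 1" and z: "z \<in> origin_cell \<rho> (hex_neighbours a)"
    and w: "w \<in> skew_lattice a (a * sqrt 3 / 2) (1/2) - {0}"
  shows "\<exists>n\<in>hex_neighbours a. norm (n - z) \<le> norm (w - z)"
proof (cases "w \<in> hex_neighbours a")
  case False
  obtain p q where pq: "z = (p, q)" by (cases z)
  note bounds = origin_cell_hex_neighbours_bounds[OF a \<rho> z[unfolded pq]]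
  obtain n where n: "n \<in> hex_neighbours a" "norm (n - z) \<le> a"
    using hexagon_close_neighbour[OF a bounds] unfolding pq by blast
  have "(norm z)\<^sup>2 = p\<^sup>2 + q\<^sup>2"
    unfolding pq norm_Pair using real_sqrt_pow2[OF sum_power2_ge_zero[of p q]] by simp
  then have "(sqrt 3 * norm z)\<^sup>2 \<le> a\<^sup>2"
    using hexagon_norm_le[OF bounds] by (simp only: power_mult_distrib real_sqrt_pow2)
  then have "sqrt 3 * norm z \<le> a" by (rule power2_le_imp_le) (use a in simp)
  moreover have "sqrt 3 * a \<le> norm w" using triangular_lattice_norm_ge[OF a] w False by blast
  then have "3 * a \<le> sqrt 3 * norm w"
    using mult_left_mono[of "sqrt 3 * a" "norm w" "sqrt 3"] by (simp add: mult.assoc[symmetric])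
  moreover have "sqrt 3 < 2" by (rule real_less_lsqrt) simp_all
  then have "sqrt 3 * a \<le> 2 * a" using a by simp
  ultimately have "sqrt 3 * a \<le> sqrt 3 * (norm w - norm z)" unfolding right_diff_distrib by linarith
  then have "a \<le> norm w - norm z" by simp
  also have "\<dots> \<le> norm (w - z)" by (rule norm_triangle_ineq2)
  finally have "norm (n - z) \<le> norm (w - z)" using n(2) by linarith
  then show ?thesis using n(1) by blast
next
  case True
  then show ?thesis by blast
qed

lemma tendsto_Q_union_triangular_lattice:
  assumes a: "a > 0" and \<rho>: "\<rho> > 1"
  shows "((\<lambda>r. measure lborel (Q_union (triangular_lattice a) \<rho> \<inter> ball 0 r) / (pi * r\<^sup>2))
           \<longlongrightarrow> triangular_fraction \<rho>) at_top"
proof -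
  have b: "a * sqrt 3 / 2 > 0" using a by simp
  have "((\<lambda>r. measure lborel (Q_union (triangular_lattice a) \<rho> \<inter> ball 0 r) / (pi * r\<^sup>2))
      \<longlongrightarrow> measure lborel (origin_cell \<rho> (hex_neighbours a)) / (a * (a * sqrt 3 / 2))) at_top"
    unfolding triangular_lattice_eq_skew_lattice
  proof (rule tendsto_Q_union_skew_lattice[OF a b \<rho> _ _ hex_neighbours_subset[OF a]])
    show "finite (hex_neighbours a)" "hex_neighbours a \<noteq> {}" by (simp_all add: hex_neighbours_def)
  qed (use hex_neighbours_nearest[OF a less_imp_le[OF \<rho>]] in blast)
  moreover have "measure lborel (origin_cell \<rho> (hex_neighbours a)) = (a * (a * sqrt 3 / 2)) * triangular_fraction \<rho>"
  proof -
    have r1: "\<rho>\<^sup>2 - 1 > 0" using one_less_power[OF \<rho>, of 2] by simp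
    then have "measure lborel (origin_cell \<rho> (hex_neighbours a))
        = (a / (\<rho>\<^sup>2 - 1) * (\<rho>\<^sup>2 - 1))\<^sup>2 * sqrt 3 / 2 * triangular_fraction \<rho>"
      unfolding origin_cell_hex_neighbours[OF a \<rho>] using a
      by (intro measure_triangular_disc_cell[OF _ \<rho>]) simp
    then show ?thesis using r1 by (simp add: power2_eq_square)
  qed
  ultimately show ?thesis using a by simp
qed

lemma triangular_fraction_less:
  assumes \<rho>: "\<rho> > 1"
  shows "triangular_fraction \<rho> < 4 / (1 + \<rho>)\<^sup>2"
proof -
  define M where "M = measure lborel (disc_cell 1 (1/2) (sqrt 3 / 2) \<rho>)"
  have "M < 2 * sqrt 3 * (\<rho> - 1)\<^sup>2" "2 * M = (\<rho>\<^sup>2 - 1)\<^sup>2 * sqrt 3 * triangular_fraction \<rho>"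
    using measure_triangular_disc_cell_less[of 1 \<rho>] measure_triangular_disc_cell[of 1 \<rho>] \<rho>
    unfolding M_def by simp_all
  moreover have "(\<rho>\<^sup>2 - 1)\<^sup>2 * sqrt 3 * triangular_fraction \<rho> = sqrt 3 * ((\<rho>\<^sup>2 - 1)\<^sup>2 * triangular_fraction \<rho>)"
    by (simp add: mult_ac)
  ultimately have "sqrt 3 * ((\<rho>\<^sup>2 - 1)\<^sup>2 * triangular_fraction \<rho>) < sqrt 3 * (4 * (\<rho> - 1)\<^sup>2)" by linarith
  then have "(\<rho>\<^sup>2 - 1)\<^sup>2 * triangular_fraction \<rho> < 4 * (\<rho> - 1)\<^sup>2" by simp
  moreover have "(\<rho>\<^sup>2 - 1)\<^sup>2 = (\<rho> - 1)\<^sup>2 * (1 + \<rho>)\<^sup>2" by (simp add: power2_eq_square algebra_simps)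
  ultimately show ?thesis using \<rho> by (simp add: field_simps)
qed

section \<open>Asymptotics\<close>

lemma square_fraction_asymp_equiv: "square_fraction \<sim>[at_top] (\<lambda>\<rho>. pi / \<rho>\<^sup>2)"
proof -
  have E: "\<forall>\<^sub>F \<rho> in at_top. (4 * \<rho>\<^sup>2 * (pi/4 - arctan (1 / sqrt (2*\<rho>\<^sup>2 - 1))) - 2 * sqrt (2*\<rho>\<^sup>2 - 1) + 2)
      / (\<rho>\<^sup>2 - 1)\<^sup>2 = square_fraction \<rho>"
    using eventually_gt_at_top[of "1::real"]
  proof eventually_elim
    fix \<rho> :: real assume \<rho>: "\<rho> > 1"
    define s where "s = sqrt (2*\<rho>\<^sup>2 - 1)"
    have s0: "s > 0" unfolding s_def using one_less_power[OF \<rho>, of 2] by simp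
    have "arctan s - arctan 1 = arctan ((s - 1) / (1 + s * 1))" by (rule arctan_diff) (use s0 in auto)
    then have "arctan ((s - 1) / (s + 1)) = pi/4 - arctan (1/s)"
      using arctan_inverse_pos[OF s0] arctan_one by (simp add: add.commute)
    then show "(4 * \<rho>\<^sup>2 * (pi/4 - arctan (1 / sqrt (2*\<rho>\<^sup>2 - 1))) - 2 * sqrt (2*\<rho>\<^sup>2 - 1) + 2)
        / (\<rho>\<^sup>2 - 1)\<^sup>2 = square_fraction \<rho>"
      unfolding square_fraction_def s_def[symmetric] by simp
  qed
  have A: "(\<lambda>\<rho>::real. (4 * \<rho>\<^sup>2 * (pi/4 - arctan (1 / sqrt (2*\<rho>\<^sup>2 - 1))) - 2 * sqrt (2*\<rho>\<^sup>2 - 1) + 2)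
      / (\<rho>\<^sup>2 - 1)\<^sup>2) \<sim>[at_top] (\<lambda>\<rho>. pi / \<rho>\<^sup>2)"
    by real_asymp
  show ?thesis by (rule asymp_equiv_transfer[OF A E]) simp
qed

lemma triangular_fraction_asymp_equiv: "triangular_fraction \<sim>[at_top] (\<lambda>\<rho>. 2 * pi / sqrt 3 / \<rho>\<^sup>2)"
proof -
  have E: "\<forall>\<^sub>F \<rho> in at_top. (4 * sqrt 3 * \<rho>\<^sup>2 * (pi/6 - arctan (1 / sqrt (4*\<rho>\<^sup>2 - 1)))
      - sqrt 3 * sqrt (4*\<rho>\<^sup>2 - 1) + 3) / (\<rho>\<^sup>2 - 1)\<^sup>2 = triangular_fraction \<rho>"
    using eventually_gt_at_top[of "1::real"]
  proof eventually_elim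
    fix \<rho> :: real assume \<rho>: "\<rho> > 1"
    define r where "r = sqrt (4*\<rho>\<^sup>2 - 1)"
    have "sqrt 3 < r" unfolding r_def by (rule triangular_radical_bounds(1)[OF \<rho>])
    moreover have "r > 0" using calculation by (smt (verit) real_sqrt_gt_zero)
    ultimately have "arctan ((r - sqrt 3) / (sqrt 3 * r + 1)) = pi/6 - arctan (1/r)"
      using triangular_arctan_identities(1) arctan_inverse_pos[of r] by simp
    then show "(4 * sqrt 3 * \<rho>\<^sup>2 * (pi/6 - arctan (1 / sqrt (4*\<rho>\<^sup>2 - 1)))
        - sqrt 3 * sqrt (4*\<rho>\<^sup>2 - 1) + 3) / (\<rho>\<^sup>2 - 1)\<^sup>2 = triangular_fraction \<rho>"
      unfolding triangular_fraction_def r_def[symmetric] by simp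
  qed
  have A: "(\<lambda>\<rho>::real. (4 * sqrt 3 * \<rho>\<^sup>2 * (pi/6 - arctan (1 / sqrt (4*\<rho>\<^sup>2 - 1)))
      - sqrt 3 * sqrt (4*\<rho>\<^sup>2 - 1) + 3) / (\<rho>\<^sup>2 - 1)\<^sup>2) \<sim>[at_top] (\<lambda>\<rho>. (4 * sqrt 3 * pi/6) / \<rho>\<^sup>2)"
    by real_asymp
  have "4 * sqrt 3 * pi / 6 = 2 * pi / sqrt 3"
    using real_sqrt_mult_self[of 3] by (simp add: field_simps)
  then show ?thesis by (intro asymp_equiv_transfer[OF A E]) simp
qed

theorem lemma8:
  fixes a :: real
  assumes "a > 0"
  shows
   "(\<forall>\<rho>>1.
       ((\<lambda>r. measure lborel (Q_union (square_lattice a) \<rho> \<inter> ball 0 r) / (pi * r\<^sup>2))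
         \<longlongrightarrow> (4 * \<rho>\<^sup>2 * arctan ((sqrt (2*\<rho>\<^sup>2 - 1) - 1) / (sqrt (2*\<rho>\<^sup>2 - 1) + 1))
               - 2 * sqrt (2*\<rho>\<^sup>2 - 1) + 2) / (\<rho>\<^sup>2 - 1)\<^sup>2) at_top
     \<and> area_fraction (Q_union (square_lattice a) \<rho>) < 4 / (1 + \<rho>)\<^sup>2)
  \<and> (\<forall>\<rho>>1.
       ((\<lambda>r. measure lborel (Q_union (triangular_lattice a) \<rho> \<inter> ball 0 r) / (pi * r\<^sup>2))
         \<longlongrightarrow> (4 * sqrt 3 * \<rho>\<^sup>2 * arctan ((sqrt (4*\<rho>\<^sup>2 - 1) - sqrt 3) / (sqrt 3 * sqrt (4*\<rho>\<^sup>2 - 1) + 1))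
               - sqrt 3 * sqrt (4*\<rho>\<^sup>2 - 1) + 3) / (\<rho>\<^sup>2 - 1)\<^sup>2) at_top
     \<and> area_fraction (Q_union (triangular_lattice a) \<rho>) < 4 / (1 + \<rho>)\<^sup>2)
  \<and> (\<lambda>\<rho>. area_fraction (Q_union (square_lattice a) \<rho>)) \<sim>[at_top] (\<lambda>\<rho>. pi / \<rho>\<^sup>2)
  \<and> (\<lambda>\<rho>. area_fraction (Q_union (triangular_lattice a) \<rho>)) \<sim>[at_top] (\<lambda>\<rho>. 2 * pi / sqrt 3 / \<rho>\<^sup>2)"
proof -
  have square: "area_fraction (Q_union (square_lattice a) \<rho>) = square_fraction \<rho>"
    and triangular: "area_fraction (Q_union (triangular_lattice a) \<rho>) = triangular_fraction \<rho>"
    if "\<rho> > 1" for \<rho>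
    using area_fraction_eqI tendsto_Q_union_square_lattice[OF assms that]
      tendsto_Q_union_triangular_lattice[OF assms that] by blast+
  have "(\<lambda>\<rho>. area_fraction (Q_union (square_lattice a) \<rho>)) \<sim>[at_top] (\<lambda>\<rho>. pi / \<rho>\<^sup>2)"
    by (rule asymp_equiv_transfer[OF square_fraction_asymp_equiv])
      (auto intro: eventually_mono[OF eventually_gt_at_top[of 1]] simp: square)
  moreover have "(\<lambda>\<rho>. area_fraction (Q_union (triangular_lattice a) \<rho>)) \<sim>[at_top] (\<lambda>\<rho>. 2 * pi / sqrt 3 / \<rho>\<^sup>2)"
    by (rule asymp_equiv_transfer[OF triangular_fraction_asymp_equiv])
      (auto intro: eventually_mono[OF eventually_gt_at_top[of 1]] simp: triangular)
  ultimately show ?thesis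
    unfolding square_fraction_def[symmetric] triangular_fraction_def[symmetric]
    using tendsto_Q_union_square_lattice[OF assms] tendsto_Q_union_triangular_lattice[OF assms]
      square triangular square_fraction_less triangular_fraction_less by simp
qed

end
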